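(* Let $n\ge1$. (i) For $I,J\subseteq\{1,\dots,n-1\}$, the number $\widehat a_{n,I,J}$ of simple $n$-braids $x$ with $D_L(x)\supseteq I$ and $D_R(x)\supseteq J$ depends only on the $n$-partitions $\{I\}_n$ and $\{J\}_n$. (ii) For each fixed $I\subseteq\{1,\dots,n-1\}$, the number $a_{n,I,J}$ of simple $n$-braids $x$ with $D_L(x)=I$ and $D_R(x)\supseteq J$ depends (as $J$ varies over subsets of $\{1,\dots,n-1\}$) only on the $n$-partition $\{J\}_n$.
   Context: $B_n^+$ is the positive braid monoid with generators $\sigma_1,\dots,\sigma_{n-1}$ and relations $\sigma_i\sigma_j=\sigma_j\sigma_i$ ($|i-j|\ge2$), $\sigma_i\sigma_j\sigma_i=\sigma_j\sigma_i\sigma_j$ ($|i-j|=1$). $\Delta_1=1$, $\Delta_n=\sigma_1\cdots\sigma_{n-1}\Delta_{n-1}$. Simple $n$-braids are the left (equivalently right) divisors of $\Delta_n$ in $B_n^+$. For simple $x$, $D_L(x)$ (resp. $D_R(x)$) is the set of $i\in\{1,\dots,n-1\}$ with $\sigma_i$ a left (resp. right) divisor of $x$. For $I\subseteq\{1,\dots,n-1\}$, if $p_1<\dots<p_k$ is the increasing enumeration of $\{1,\dots,n\}\setminus I$, the $n$-composition of $I$ is $(p_1,p_2-p_1,\dots,p_k-p_{k-1})$ and the $n$-partition $\{I\}_n$ is the non-increasing rearrangement of the $n$-composition. *)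

theory Defs
  imports Main
begin

text \<open>Positive braid monoid B_n^+ : words over the generators 1..n-1 (generator i
stands for sigma_i) modulo the congruence generated by the braid relations.\<close>

definition gens :: "nat \<Rightarrow> nat set" where
  "gens n = {1..n-1}"

inductive braid_step :: "nat \<Rightarrow> nat list \<Rightarrow> nat list \<Rightarrow> bool" for n where
  comm: "\<lbrakk>i \<in> gens n; j \<in> gens n; i \<ge> j + 2 \<or> j \<ge> i + 2\<rbrakk>
         \<Longrightarrow> braid_step n (u @ [i, j] @ v) (u @ [j, i] @ v)"
| braid: "\<lbrakk>i \<in> gens n; j \<in> gens n; i = j + 1 \<or> j = i + 1\<rbrakk>
         \<Longrightarrow> braid_step n (u @ [i, j, i] @ v) (u @ [j, i, j] @ v)"

definition braid_eq :: "nat \<Rightarrow> nat list \<Rightarrow> nat list \<Rightarrow> bool" where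
  "braid_eq n = (\<lambda>u v. braid_step n u v \<or> braid_step n v u)\<^sup>*\<^sup>*"

definition words :: "nat \<Rightarrow> nat list set" where
  "words n = {w. set w \<subseteq> gens n}"

definition braid_class :: "nat \<Rightarrow> nat list \<Rightarrow> nat list set" where
  "braid_class n w = {v \<in> words n. braid_eq n w v}"

fun Delta :: "nat \<Rightarrow> nat list" where
  "Delta 0 = []"
| "Delta (Suc m) = [1..<Suc m] @ Delta m"

definition left_div :: "nat \<Rightarrow> nat list \<Rightarrow> nat list \<Rightarrow> bool" where
  "left_div n u w \<longleftrightarrow> (\<exists>v \<in> words n. braid_eq n (u @ v) w)"

definition right_div :: "nat \<Rightarrow> nat list \<Rightarrow> nat list \<Rightarrow> bool" where
  "right_div n u w \<longleftrightarrow> (\<exists>v \<in> words n. braid_eq n (v @ u) w)"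

definition simple_words :: "nat \<Rightarrow> nat list set" where
  "simple_words n = {w \<in> words n. left_div n w (Delta n)}"

definition DL :: "nat \<Rightarrow> nat list \<Rightarrow> nat set" where
  "DL n w = {i \<in> gens n. left_div n [i] w}"

definition DR :: "nat \<Rightarrow> nat list \<Rightarrow> nat set" where
  "DR n w = {i \<in> gens n. right_div n [i] w}"

definition ahat :: "nat \<Rightarrow> nat set \<Rightarrow> nat set \<Rightarrow> nat" where
  "ahat n I J = card (braid_class n ` {w \<in> simple_words n. I \<subseteq> DL n w \<and> J \<subseteq> DR n w})"

definition a_count :: "nat \<Rightarrow> nat set \<Rightarrow> nat set \<Rightarrow> nat" where
  "a_count n I J = card (braid_class n ` {w \<in> simple_words n. DL n w = I \<and> J \<subseteq> DR n w})"

definition ncomp :: "nat \<Rightarrow> nat set \<Rightarrow> nat list" where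
  "ncomp n I = (let ps = sorted_list_of_set ({1..n} - I)
                in hd ps # map (\<lambda>(a, b). b - a) (zip ps (tl ps)))"

definition npart :: "nat \<Rightarrow> nat set \<Rightarrow> nat list" where
  "npart n I = rev (sort (ncomp n I))"

end

theory Submission
  imports Defs "HOL-Combinatorics.Permutations" "HOL-Library.Multiset"
begin

(* Simple braids are represented by reduced words, and by Matsumoto's theorem two reduced words
   are braid equivalent iff they induce the same permutation of {1..n}. This identifies simple
   n-braids with permutations, turning D_R and D_L into the right and left descent sets.

   A permutation f with I contained in D_L(f) and J contained in D_R(f) is the unique longest
   element of its double coset S_I f S_J, where S_I and S_J are the Young subgroups permuting the
   blocks of I and J. Hence ahat n I J counts these double cosets. Conjugation by a permutation
   carrying the blocks of J onto the blocks of J' (which exists iff the block sizes agree, i.e.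
   iff the n-partitions agree) matches the double cosets for J with those for J', and inversion
   f |-> f^-1 exchanges the roles of I and J; this gives (i). Since ahat n I J is the sum of
   a_count n K J over all K containing I, (ii) follows by Moebius inversion. *)

section \<open>Words and permutations\<close>

definition adj_swap :: "nat \<Rightarrow> nat \<Rightarrow> nat" where
  "adj_swap i x = (if x = i then Suc i else if x = Suc i then i else x)"

primrec perm_of :: "nat list \<Rightarrow> nat \<Rightarrow> nat" where
  "perm_of [] = id"
| "perm_of (i # w) = adj_swap i \<circ> perm_of w"

definition Sym :: "nat \<Rightarrow> (nat \<Rightarrow> nat) set" where
  "Sym n = {f. f permutes {1..n}}"

lemma gens_iff: "i \<in> gens n \<longleftrightarrow> 1 \<le> i \<and> Suc i \<le> n"
  by (auto simp: gens_def)

lemma words_Nil [simp]: "[] \<in> words n"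
  by (simp add: words_def)

lemma words_Cons [simp]: "a # v \<in> words n \<longleftrightarrow> a \<in> gens n \<and> v \<in> words n"
  by (auto simp: words_def)

lemma words_append [simp]: "u @ v \<in> words n \<longleftrightarrow> u \<in> words n \<and> v \<in> words n"
  by (auto simp: words_def)

lemma words_rev [simp]: "rev w \<in> words n \<longleftrightarrow> w \<in> words n"
  by (simp add: words_def)

lemma adj_swap_adj_swap [simp]: "adj_swap i (adj_swap i x) = x"
  by (auto simp: adj_swap_def)

lemma adj_swap_comp_adj_swap [simp]: "adj_swap i \<circ> adj_swap i = id"
  by (simp add: fun_eq_iff)

lemma adj_swap_eq_iff [simp]: "adj_swap i x = adj_swap i y \<longleftrightarrow> x = y"
  by (metis adj_swap_adj_swap)

lemma adj_swap_commute:
  "i \<ge> j + 2 \<or> j \<ge> i + 2 \<Longrightarrow> adj_swap i (adj_swap j x) = adj_swap j (adj_swap i x)"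
  by (auto simp: adj_swap_def)

lemma adj_swap_braid:
  "i = j + 1 \<or> j = i + 1 \<Longrightarrow>
     adj_swap i (adj_swap j (adj_swap i x)) = adj_swap j (adj_swap i (adj_swap j x))"
  by (auto simp: adj_swap_def)

lemma bij_adj_swap: "bij (adj_swap i)"
  by (rule o_bij[of "adj_swap i"]) auto

lemma inv_adj_swap [simp]: "inv (adj_swap i) = adj_swap i"
  by (rule inv_unique_comp) auto

lemma perm_of_append [simp]: "perm_of (u @ v) = perm_of u \<circ> perm_of v"
  by (induction u) (auto simp: comp_assoc)

lemma Sym_range: "f \<in> Sym n \<Longrightarrow> x \<in> {1..n} \<Longrightarrow> f x \<in> {1..n}"
  by (metis Sym_def mem_Collect_eq permutes_in_image)

lemma Sym_fixed: "f \<in> Sym n \<Longrightarrow> x \<notin> {1..n} \<Longrightarrow> f x = x"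
  by (simp add: Sym_def permutes_not_in)

lemma Sym_inj_eq: "f \<in> Sym n \<Longrightarrow> f x = f y \<longleftrightarrow> x = y"
  by (auto simp: Sym_def dest: permutes_inj injD)

lemma Sym_comp: "f \<in> Sym n \<Longrightarrow> g \<in> Sym n \<Longrightarrow> f \<circ> g \<in> Sym n"
  by (simp add: Sym_def permutes_compose)

lemma id_in_Sym: "id \<in> Sym n"
  by (simp add: Sym_def permutes_id)

lemma inv_in_Sym: "f \<in> Sym n \<Longrightarrow> inv f \<in> Sym n"
  by (simp add: Sym_def permutes_inv)

lemma Sym_inv_apply: "f \<in> Sym n \<Longrightarrow> f (inv f x) = x" "f \<in> Sym n \<Longrightarrow> inv f (f x) = x"
  by (simp_all add: Sym_def permutes_inverses)

lemma Sym_inv_inv: "f \<in> Sym n \<Longrightarrow> inv (inv f) = f"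
  by (simp add: Sym_def inv_inv_eq permutes_bij)

lemma finite_Sym: "finite (Sym n)"
  unfolding Sym_def by (rule finite_permutations) simp

lemma adj_swap_in_Sym: "i \<in> gens n \<Longrightarrow> adj_swap i \<in> Sym n"
proof -
  assume "i \<in> gens n"
  moreover have "adj_swap i = Transposition.transpose i (Suc i)"
    by (auto simp: fun_eq_iff adj_swap_def Transposition.transpose_def)
  ultimately show ?thesis
    unfolding Sym_def mem_Collect_eq by (auto intro: permutes_swap_id simp: gens_iff)
qed

lemma perm_of_snoc_cancel:
  assumes "perm_of (u @ [i]) = perm_of (v @ [i])"
  shows "perm_of u = perm_of v"
proof -
  have "perm_of u = perm_of (u @ [i]) \<circ> adj_swap i"
    by (simp add: comp_assoc)
  also have "\<dots> = perm_of v"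
    unfolding assms by (simp add: comp_assoc)
  finally show ?thesis .
qed

lemma perm_of_in_Sym: "w \<in> words n \<Longrightarrow> perm_of w \<in> Sym n"
  by (induction w) (auto intro: Sym_comp adj_swap_in_Sym id_in_Sym)

lemma perm_of_rev: "w \<in> words n \<Longrightarrow> perm_of (rev w) = inv (perm_of w)"
proof (induction w)
  case (Cons a w)
  have "bij (perm_of w)"
    using perm_of_in_Sym[of w n] Cons.prems by (simp add: Sym_def permutes_bij)
  then have "inv (adj_swap a \<circ> perm_of w) = inv (perm_of w) \<circ> adj_swap a"
    using o_inv_distrib[OF bij_adj_swap] by simp
  then show ?case
    using Cons by (simp only: rev.simps perm_of_append perm_of.simps) simp
qed simp

lemma Sym_increasing_eq_id:
  assumes f: "f \<in> Sym n" and inc: "\<And>i. 1 \<le> i \<Longrightarrow> Suc i \<le> n \<Longrightarrow> f i < f (Suc i)"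
  shows "f = id"
proof
  have ge: "p \<le> f p" if "1 \<le> p" "p \<le> n" for p
    using that
  proof (induction p)
    case (Suc p)
    then show ?case using inc[of p] Sym_range[OF f, of 1] by (cases "p = 0") auto
  qed simp
  have le: "f (n - k) \<le> n - k" if "1 \<le> n - k" for k
    using that
  proof (induction k)
    case 0
    then show ?case using Sym_range[OF f, of n] by auto
  next
    case (Suc k)
    then have "Suc (n - Suc k) = n - k" by auto
    then show ?case using Suc inc[of "n - Suc k"] by auto
  qed
  fix x
  show "f x = id x"
  proof (cases "x \<in> {1..n}")
    case True
    then show ?thesis using ge[of x] le[of "n - x"] by auto
  qed (simp add: Sym_fixed[OF f])
qed

section \<open>Braid equivalence\<close>

lemma braid_eq_refl [simp]: "braid_eq n a a"
  by (simp add: braid_eq_def)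

lemma braid_eq_sym: "braid_eq n a b \<Longrightarrow> braid_eq n b a"
  unfolding braid_eq_def by (rule sympD[OF symp_rtranclp]) (auto simp: symp_def)

lemma braid_eq_trans: "braid_eq n a b \<Longrightarrow> braid_eq n b c \<Longrightarrow> braid_eq n a c"
  unfolding braid_eq_def by (rule rtranclp_trans)

lemma braid_step_imp_braid_eq: "braid_step n a b \<Longrightarrow> braid_eq n a b"
  unfolding braid_eq_def by auto

lemma rtranclp_map:
  assumes "\<And>a b. R a b \<Longrightarrow> R (h a) (h b)" and "R\<^sup>*\<^sup>* a b"
  shows "R\<^sup>*\<^sup>* (h a) (h b)"
  using assms(2) by induction (auto intro: rtranclp.rtrancl_into_rtrancl assms(1))

lemma braid_step_append: "braid_step n a b \<Longrightarrow> braid_step n (a @ d) (b @ d)"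
proof (induction rule: braid_step.induct)
  case (comm i j u v)
  then show ?case using braid_step.comm[of i n j u "v @ d"] by simp
next
  case (braid i j u v)
  then show ?case using braid_step.braid[of i n j u "v @ d"] by simp
qed

lemma braid_eq_append: "braid_eq n a b \<Longrightarrow> braid_eq n (a @ d) (b @ d)"
  unfolding braid_eq_def
  by (rule rtranclp_map[where h = "\<lambda>x. x @ d"]) (auto dest: braid_step_append)

lemma braid_step_rev: "braid_step n a b \<Longrightarrow> braid_step n (rev b) (rev a)"
proof (induction rule: braid_step.induct)
  case (comm i j u v)
  then show ?case using braid_step.comm[of i n j "rev v" "rev u"] by auto
next
  case (braid i j u v)
  then show ?case using braid_step.braid[of j n i "rev v" "rev u"] by auto
qed

lemma braid_eq_rev: "braid_eq n a b \<Longrightarrow> braid_eq n (rev a) (rev b)"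
  unfolding braid_eq_def by (rule rtranclp_map[where h = rev]) (auto dest: braid_step_rev)

lemma braid_step_invariants:
  "braid_step n a b \<Longrightarrow> perm_of a = perm_of b \<and> length a = length b"
proof (induction rule: braid_step.induct)
  case (comm i j u v)
  then have "adj_swap i (adj_swap j x) = adj_swap j (adj_swap i x)" for x
    by (intro adj_swap_commute) auto
  then show ?case by (simp add: fun_eq_iff)
next
  case (braid i j u v)
  then have "adj_swap i (adj_swap j (adj_swap i x)) = adj_swap j (adj_swap i (adj_swap j x))" for x
    by (intro adj_swap_braid) auto
  then show ?case by (simp add: fun_eq_iff)
qed

lemma braid_eq_invariants:
  "braid_eq n a b \<Longrightarrow> perm_of a = perm_of b \<and> length a = length b"
  unfolding braid_eq_def
  by (induction rule: rtranclp_induct) (auto dest!: braid_step_invariants)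

section \<open>Length of a permutation\<close>

definition inversions :: "nat \<Rightarrow> (nat \<Rightarrow> nat) \<Rightarrow> (nat \<times> nat) set" where
  "inversions n f = {(p, q). p \<in> {1..n} \<and> q \<in> {1..n} \<and> p < q \<and> f q < f p}"

definition perm_length :: "nat \<Rightarrow> (nat \<Rightarrow> nat) \<Rightarrow> nat" where
  "perm_length n f = card (inversions n f)"

definition reduced_words :: "nat \<Rightarrow> nat list set" where
  "reduced_words n = {w \<in> words n. perm_length n (perm_of w) = length w}"

lemma finite_inversions [simp]: "finite (inversions n f)"
  by (rule finite_subset[of _ "{1..n} \<times> {1..n}"]) (auto simp: inversions_def)

lemma perm_length_id [simp]: "perm_length n id = 0"
proof -
  have "inversions n id = {}"
    by (auto simp: inversions_def)
  then show ?thesis by (simp add: perm_length_def)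
qed

lemma adj_swap_in_range: "i \<in> gens n \<Longrightarrow> x \<in> {1..n} \<Longrightarrow> adj_swap i x \<in> {1..n}"
  by (auto simp: adj_swap_def gens_iff)

lemma adj_swap_less: "p < q \<Longrightarrow> (p, q) \<noteq> (i, Suc i) \<Longrightarrow> adj_swap i p < adj_swap i q"
  by (auto simp: adj_swap_def)

text \<open>Composing with the adjacent transposition \<open>(i, i+1)\<close> on the right permutes the pairs
  of positions and only changes the status of the pair \<open>(i, i+1)\<close> itself.\<close>

lemma card_inversions_adj_swap:
  assumes i: "i \<in> gens n"
  shows "card (inversions n (f \<circ> adj_swap i) - {(i, Suc i)}) = card (inversions n f - {(i, Suc i)})"
proof -
  let ?s = "\<lambda>(p, q). (adj_swap i p, adj_swap i q)"
  have maps: "?s ` (inversions n g - {(i, Suc i)}) \<subseteq> inversions n (g \<circ> adj_swap i) - {(i, Suc i)}"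
    for g
  proof
    fix x assume "x \<in> ?s ` (inversions n g - {(i, Suc i)})"
    then obtain p q where x: "x = (adj_swap i p, adj_swap i q)"
      and pq: "(p, q) \<in> inversions n g" "(p, q) \<noteq> (i, Suc i)"
      by auto
    then have "adj_swap i p < adj_swap i q"
      by (intro adj_swap_less) (auto simp: inversions_def)
    moreover have "(adj_swap i p, adj_swap i q) \<noteq> (i, Suc i)"
      using pq by (auto simp: inversions_def adj_swap_def split: if_splits)
    ultimately show "x \<in> inversions n (g \<circ> adj_swap i) - {(i, Suc i)}"
      using x pq adj_swap_in_range[OF i] by (auto simp: inversions_def)
  qed
  have inj: "inj_on ?s A" for A
    by (auto simp: inj_on_def)
  have "f \<circ> adj_swap i \<circ> adj_swap i = f"
    by (simp add: comp_assoc)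
  then show ?thesis
    using card_inj_on_le[OF inj maps[of f]] card_inj_on_le[OF inj maps[of "f \<circ> adj_swap i"]]
    by simp
qed

lemma perm_length_adj_swap_ascent:
  assumes "i \<in> gens n" and "f i < f (Suc i)"
  shows "perm_length n (f \<circ> adj_swap i) = perm_length n f + 1"
proof -
  let ?A = "inversions n (f \<circ> adj_swap i)"
  have new: "(i, Suc i) \<in> ?A" and old: "(i, Suc i) \<notin> inversions n f"
    using assms by (auto simp: inversions_def adj_swap_def gens_iff)
  have "card ?A = Suc (card (?A - {(i, Suc i)}))"
    using finite_inversions new by (rule card.remove)
  moreover have "inversions n f - {(i, Suc i)} = inversions n f"
    using old by simp
  ultimately show ?thesis
    unfolding perm_length_def using card_inversions_adj_swap[OF assms(1), of f] by simp
qed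

lemma perm_length_adj_swap_descent:
  assumes "i \<in> gens n" and "f (Suc i) < f i"
  shows "perm_length n f = perm_length n (f \<circ> adj_swap i) + 1"
proof -
  have "(f \<circ> adj_swap i) i < (f \<circ> adj_swap i) (Suc i)"
    using assms(2) by (simp add: adj_swap_def)
  moreover have "f \<circ> adj_swap i \<circ> adj_swap i = f"
    by (simp add: comp_assoc)
  ultimately show ?thesis
    using perm_length_adj_swap_ascent[OF assms(1)] by metis
qed

lemma perm_length_adj_swap_le:
  assumes "i \<in> gens n"
  shows "perm_length n (f \<circ> adj_swap i) \<le> perm_length n f + 1"
proof -
  let ?A = "inversions n (f \<circ> adj_swap i)"
  have "card A \<le> card (A - {x}) + 1" for A and x :: "nat \<times> nat"
    by (cases "x \<in> A") (auto simp: card_Diff_singleton_if)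
  then have "card ?A \<le> card (?A - {(i, Suc i)}) + 1"
    by simp
  also have "\<dots> \<le> card (inversions n f) + 1"
    using card_inversions_adj_swap[OF assms, of f] by (simp add: card_Diff1_le)
  finally show ?thesis by (simp add: perm_length_def)
qed

lemma perm_length_comp_perm_of_le:
  "w \<in> words n \<Longrightarrow> perm_length n (f \<circ> perm_of w) \<le> perm_length n f + length w"
proof (induction w arbitrary: f)
  case (Cons a w)
  have "perm_length n (f \<circ> adj_swap a \<circ> perm_of w) \<le> perm_length n (f \<circ> adj_swap a) + length w"
    by (rule Cons.IH) (use Cons.prems in simp)
  also have "\<dots> \<le> perm_length n f + 1 + length w"
    using perm_length_adj_swap_le[of a n f] Cons.prems by simp
  finally show ?case
    by (simp only: perm_of.simps comp_assoc length_Cons)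
qed simp

lemma perm_length_perm_of_le: "w \<in> words n \<Longrightarrow> perm_length n (perm_of w) \<le> length w"
  using perm_length_comp_perm_of_le[of w n id] by simp

lemma perm_length_inv:
  assumes "f \<in> Sym n"
  shows "perm_length n (inv f) = perm_length n f"
proof -
  have "perm_length n g \<le> perm_length n (inv g)" if g: "g \<in> Sym n" for g
  proof -
    have "(g q, g p) \<in> inversions n (inv g)" if "(p, q) \<in> inversions n g" for p q
      using that Sym_range[OF g, of p] Sym_range[OF g, of q]
      by (auto simp: inversions_def Sym_inv_apply[OF g])
    then have "(\<lambda>(p, q). (g q, g p)) ` inversions n g \<subseteq> inversions n (inv g)"
      by auto
    moreover have "inj_on (\<lambda>(p, q). (g q, g p)) (inversions n g)"
      using g by (auto simp: inj_on_def Sym_inj_eq)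
    ultimately show ?thesis
      unfolding perm_length_def by (intro card_inj_on_le) auto
  qed
  from this[OF assms] this[OF inv_in_Sym[OF assms]] show ?thesis
    using Sym_inv_inv[OF assms] by simp
qed

lemma Sym_ascent_or_descent:
  assumes "f \<in> Sym n"
  shows "f i < f (Suc i) \<or> f (Suc i) < f i"
  using Sym_inj_eq[OF assms, of i "Suc i"] by linarith

lemma Sym_has_descent:
  assumes f: "f \<in> Sym n" and "f \<noteq> id"
  obtains i where "i \<in> gens n" "f (Suc i) < f i"
proof -
  have "\<not> (\<forall>i \<in> gens n. f i < f (Suc i))"
    using Sym_increasing_eq_id[OF f] assms(2) by (auto simp: gens_iff)
  then show thesis
    using that Sym_ascent_or_descent[OF f] by blast
qed

lemma reduced_word_exists:
  "f \<in> Sym n \<Longrightarrow> \<exists>w \<in> reduced_words n. perm_of w = f"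
proof (induction "perm_length n f" arbitrary: f)
  case 0
  have "f = id"
  proof (rule ccontr)
    assume "f \<noteq> id"
    then obtain i where "i \<in> gens n" "f (Suc i) < f i"
      using Sym_has_descent[OF "0.prems"] by blast
    then show False
      using perm_length_adj_swap_descent "0.hyps" by fastforce
  qed
  then show ?case by (intro bexI[of _ "[]"]) (auto simp: reduced_words_def)
next
  case (Suc m)
  have "f \<noteq> id" using Suc.hyps(2) by auto
  then obtain i where i: "i \<in> gens n" "f (Suc i) < f i"
    using Sym_has_descent[OF Suc.prems] by blast
  have len: "perm_length n f = perm_length n (f \<circ> adj_swap i) + 1"
    by (rule perm_length_adj_swap_descent[OF i])
  obtain w where w: "w \<in> reduced_words n" "perm_of w = f \<circ> adj_swap i"
    using Suc.hyps(1)[of "f \<circ> adj_swap i"] Suc.hyps(2) Suc.prems len i(1)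
    by (auto intro: Sym_comp adj_swap_in_Sym)
  then have "w @ [i] \<in> reduced_words n" "perm_of (w @ [i]) = f"
    using i(1) len by (auto simp: reduced_words_def comp_assoc)
  then show ?case by blast
qed

lemma reduced_snoc:
  assumes "u @ [i] \<in> reduced_words n"
  shows "u \<in> reduced_words n" and "perm_of (u @ [i]) (Suc i) < perm_of (u @ [i]) i"
proof -
  define x where "x = perm_of (u @ [i])"
  have i: "i \<in> gens n" and u: "u \<in> words n" and len: "perm_length n x = Suc (length u)"
    using assms by (auto simp: reduced_words_def x_def)
  have x: "x \<in> Sym n"
    unfolding x_def by (rule perm_of_in_Sym) (use i u in simp)
  have pu: "perm_of u = x \<circ> adj_swap i"
    by (simp add: x_def comp_assoc)
  have "\<not> x i < x (Suc i)"
  proof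
    assume "x i < x (Suc i)"
    then have "perm_length n (perm_of u) = Suc (Suc (length u))"
      using perm_length_adj_swap_ascent[OF i] len pu by simp
    then show False
      using perm_length_perm_of_le[OF u] by simp
  qed
  then show desc: "x (Suc i) < x i"
    using Sym_ascent_or_descent[OF x] by blast
  have "perm_length n (perm_of u) = length u"
    using perm_length_adj_swap_descent[OF i desc] len pu by simp
  then show "u \<in> reduced_words n"
    using u by (simp add: reduced_words_def)
qed

section \<open>Matsumoto's theorem\<close>

lemma braid_eq_snoc_reduced:
  assumes IH: "\<And>u v. u \<in> reduced_words n \<Longrightarrow> v \<in> reduced_words n \<Longrightarrow> length u = m
                 \<Longrightarrow> perm_of u = perm_of v \<Longrightarrow> braid_eq n u v"
    and u: "u @ [i] \<in> reduced_words n" "length u = m"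
    and v: "v \<in> words n" "length v = m" "perm_of v = perm_of u"
  shows "braid_eq n (u @ [i]) (v @ [i])"
proof -
  have "u \<in> reduced_words n"
    using reduced_snoc(1)[OF u(1)] .
  moreover from this have "v \<in> reduced_words n"
    using v u(2) by (simp add: reduced_words_def)
  ultimately show ?thesis
    using IH u(2) v(3) braid_eq_append by metis
qed

lemma braid_eq_snoc_pair:
  assumes IH: "\<And>u v. u \<in> reduced_words n \<Longrightarrow> v \<in> reduced_words n \<Longrightarrow> length u = m
                 \<Longrightarrow> perm_of u = perm_of v \<Longrightarrow> braid_eq n u v"
    and u: "u @ [i] \<in> reduced_words n" "length u = m"
    and v: "v @ [j] \<in> reduced_words n" "length v = m"
    and zp: "z @ p \<in> words n" "length (z @ p) = m" "perm_of (z @ p) = perm_of u"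
    and zq: "z @ q \<in> words n" "length (z @ q) = m" "perm_of (z @ q) = perm_of v"
    and "braid_eq n (z @ p @ [i]) (z @ q @ [j])"
  shows "braid_eq n (u @ [i]) (v @ [j])"
proof -
  have "braid_eq n (u @ [i]) ((z @ p) @ [i])"
    using braid_eq_snoc_reduced[OF IH u zp] .
  moreover have "braid_eq n (v @ [j]) ((z @ q) @ [j])"
    using braid_eq_snoc_reduced[OF IH v zq] .
  ultimately show ?thesis
    using \<open>braid_eq n (z @ p @ [i]) (z @ q @ [j])\<close> by (auto intro: braid_eq_trans braid_eq_sym)
qed

text \<open>The inductive step for reduced words \<open>u i\<close> and \<open>v j\<close> of the same permutation \<open>x\<close>, \<open>i < j\<close>:
  both \<open>i\<close> and \<open>j\<close> are descents of \<open>x\<close>, so \<open>x\<close> also has reduced words \<open>z j i\<close> and \<open>z i j\<close>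
  (if \<open>j \<ge> i + 2\<close>) or \<open>z i j i\<close> and \<open>z j i j\<close> (if \<open>j = i + 1\<close>). These are connected by one
  braid relation, and to \<open>u i\<close> and \<open>v j\<close> by the induction hypothesis.\<close>

lemma matsumoto_step_commuting:
  assumes IH: "\<And>u v. u \<in> reduced_words n \<Longrightarrow> v \<in> reduced_words n \<Longrightarrow> length u = m
                 \<Longrightarrow> perm_of u = perm_of v \<Longrightarrow> braid_eq n u v"
    and u: "u @ [i] \<in> reduced_words n" "length u = m"
    and v: "v @ [j] \<in> reduced_words n" "length v = m"
    and same: "perm_of (u @ [i]) = perm_of (v @ [j])" and far: "j \<ge> i + 2"
  shows "braid_eq n (u @ [i]) (v @ [j])"
proof -
  define x where "x = perm_of (u @ [i])"
  have i: "i \<in> gens n" and j: "j \<in> gens n"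
    using u(1) v(1) by (auto simp: reduced_words_def)
  have x: "x \<in> Sym n"
    unfolding x_def using u(1) by (intro perm_of_in_Sym) (simp add: reduced_words_def)
  have dj: "x (Suc j) < x j"
    using reduced_snoc(2)[OF v(1)] unfolding x_def same .
  have pu: "perm_of u = x \<circ> adj_swap i"
    unfolding x_def by (simp add: comp_assoc)
  have pv: "perm_of v = x \<circ> adj_swap j"
    unfolding x_def same by (simp add: comp_assoc)
  have "perm_length n (perm_of u) = m"
    using reduced_snoc(1)[OF u(1)] u(2) by (simp add: reduced_words_def)
  moreover have "(x \<circ> adj_swap i) (Suc j) < (x \<circ> adj_swap i) j"
    using dj far by (simp add: adj_swap_def)
  ultimately have len: "perm_length n (x \<circ> adj_swap i \<circ> adj_swap j) + 1 = m"
    using perm_length_adj_swap_descent[OF j] pu by simp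
  have "x \<circ> adj_swap i \<circ> adj_swap j \<in> Sym n"
    using x i j by (intro Sym_comp adj_swap_in_Sym)
  then obtain z where z: "z \<in> reduced_words n" "perm_of z = x \<circ> adj_swap i \<circ> adj_swap j"
    using reduced_word_exists by blast
  have "adj_swap i (adj_swap j a) = adj_swap j (adj_swap i a)" for a
    using far by (intro adj_swap_commute) simp
  then have "perm_of (z @ [j]) = perm_of u" and "perm_of (z @ [i]) = perm_of v"
    using z(2) pu pv by (simp_all add: fun_eq_iff)
  moreover have "braid_step n (z @ [j, i] @ []) (z @ [i, j] @ [])"
    by (rule braid_step.comm) (use i j far in auto)
  ultimately show ?thesis
    using braid_eq_snoc_pair[OF IH u v, of z "[j]" "[i]"] z len i j
    by (simp add: reduced_words_def braid_step_imp_braid_eq)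
qed

lemma matsumoto_step_braid:
  assumes IH: "\<And>u v. u \<in> reduced_words n \<Longrightarrow> v \<in> reduced_words n \<Longrightarrow> length u = m
                 \<Longrightarrow> perm_of u = perm_of v \<Longrightarrow> braid_eq n u v"
    and u: "u @ [i] \<in> reduced_words n" "length u = m"
    and v: "v @ [j] \<in> reduced_words n" "length v = m"
    and same: "perm_of (u @ [i]) = perm_of (v @ [j])" and adj: "j = Suc i"
  shows "braid_eq n (u @ [i]) (v @ [j])"
proof -
  define x where "x = perm_of (u @ [i])"
  have i: "i \<in> gens n" and j: "j \<in> gens n"
    using u(1) v(1) by (auto simp: reduced_words_def)
  have x: "x \<in> Sym n"
    unfolding x_def using u(1) by (intro perm_of_in_Sym) (simp add: reduced_words_def)
  have di: "x (Suc i) < x i"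
    using reduced_snoc(2)[OF u(1)] unfolding x_def .
  have dj: "x (Suc j) < x j"
    using reduced_snoc(2)[OF v(1)] unfolding x_def same .
  have pu: "perm_of u = x \<circ> adj_swap i"
    unfolding x_def by (simp add: comp_assoc)
  have pv: "perm_of v = x \<circ> adj_swap j"
    unfolding x_def same by (simp add: comp_assoc)
  have "perm_length n (perm_of u) = m"
    using reduced_snoc(1)[OF u(1)] u(2) by (simp add: reduced_words_def)
  moreover have "(x \<circ> adj_swap i) (Suc j) < (x \<circ> adj_swap i) j"
    using di dj adj by (simp add: adj_swap_def)
  ultimately have "perm_length n (x \<circ> adj_swap i \<circ> adj_swap j) + 1 = m"
    using perm_length_adj_swap_descent[OF j] pu by simp
  moreover have "(x \<circ> adj_swap i \<circ> adj_swap j) (Suc i) < (x \<circ> adj_swap i \<circ> adj_swap j) i"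
    using dj adj by (simp add: adj_swap_def)
  ultimately have len: "perm_length n (x \<circ> adj_swap i \<circ> adj_swap j \<circ> adj_swap i) + 2 = m"
    using perm_length_adj_swap_descent[OF i] by simp
  have "x \<circ> adj_swap i \<circ> adj_swap j \<circ> adj_swap i \<in> Sym n"
    using x i j by (intro Sym_comp adj_swap_in_Sym)
  then obtain z where z: "z \<in> reduced_words n"
    "perm_of z = x \<circ> adj_swap i \<circ> adj_swap j \<circ> adj_swap i"
    using reduced_word_exists by blast
  have "adj_swap i (adj_swap j (adj_swap i a)) = adj_swap j (adj_swap i (adj_swap j a))" for a
    using adj by (intro adj_swap_braid) simp
  then have "perm_of (z @ [i, j]) = perm_of u" and "perm_of (z @ [j, i]) = perm_of v"
    using z(2) pu pv by (simp_all add: fun_eq_iff)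
  moreover have "braid_step n (z @ [i, j, i] @ []) (z @ [j, i, j] @ [])"
    by (rule braid_step.braid) (use i j adj in auto)
  ultimately show ?thesis
    using braid_eq_snoc_pair[OF IH u v, of z "[i, j]" "[j, i]"] z len i j
    by (simp add: reduced_words_def braid_step_imp_braid_eq)
qed

lemma matsumoto_step:
  assumes IH: "\<And>u v. u \<in> reduced_words n \<Longrightarrow> v \<in> reduced_words n \<Longrightarrow> length u = m
                 \<Longrightarrow> perm_of u = perm_of v \<Longrightarrow> braid_eq n u v"
    and u: "u @ [i] \<in> reduced_words n" "length u = m"
    and v: "v @ [j] \<in> reduced_words n" "length v = m"
    and same: "perm_of (u @ [i]) = perm_of (v @ [j])" and "i < j"
  shows "braid_eq n (u @ [i]) (v @ [j])"
proof (cases "j = Suc i")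
  case True
  show ?thesis
    by (rule matsumoto_step_braid[OF IH u v same True])
next
  case False
  then have far: "j \<ge> i + 2"
    using \<open>i < j\<close> by simp
  show ?thesis
    by (rule matsumoto_step_commuting[OF IH u v same far])
qed

theorem matsumoto:
  assumes "u \<in> reduced_words n" and "v \<in> reduced_words n" and "perm_of u = perm_of v"
  shows "braid_eq n u v"
proof -
  have "length u = length v"
    using assms by (simp add: reduced_words_def)
  with assms show ?thesis
  proof (induction "length u" arbitrary: u v)
    case 0
    then show ?case by simp
  next
    case (Suc m)
    obtain u' i where u: "u = u' @ [i]"
      using Suc.hyps(2) by (cases u rule: rev_exhaust) auto
    obtain v' j where v: "v = v' @ [j]"
      using Suc.hyps(2) Suc.prems(4) by (cases v rule: rev_exhaust) auto
    have ru: "u' @ [i] \<in> reduced_words n" and rv: "v' @ [j] \<in> reduced_words n"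
      and same: "perm_of (u' @ [i]) = perm_of (v' @ [j])"
      using Suc.prems(1-3) u v by simp_all
    have lu: "length u' = m" and lv: "length v' = m"
      using Suc.hyps(2) Suc.prems(4) u v by simp_all
    have IH: "\<And>u v. u \<in> reduced_words n \<Longrightarrow> v \<in> reduced_words n \<Longrightarrow> length u = m
                 \<Longrightarrow> perm_of u = perm_of v \<Longrightarrow> braid_eq n u v"
      using Suc.hyps(1) by (simp add: reduced_words_def)
    consider "i = j" | "i < j" | "j < i"
      by arith
    then show ?case
    proof cases
      case 1
      have "perm_of v' = perm_of u'"
        using same unfolding 1 by (rule perm_of_snoc_cancel[symmetric])
      moreover have "v' \<in> words n"
        using rv by (simp add: reduced_words_def)
      ultimately show ?thesis
        using braid_eq_snoc_reduced[OF IH ru lu] lv unfolding u v 1 by blast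
    next
      case 2
      show ?thesis
        unfolding u v by (rule matsumoto_step[OF IH ru lu rv lv same 2])
    next
      case 3
      show ?thesis
        unfolding u v
        by (rule braid_eq_sym, rule matsumoto_step[OF IH rv lv ru lu same[symmetric] 3])
    qed
  qed
qed

section \<open>Simple braids are the reduced words\<close>

definition pairs_lt :: "nat \<Rightarrow> (nat \<times> nat) set" where
  "pairs_lt n = {(p, q). p \<in> {1..n} \<and> q \<in> {1..n} \<and> p < q}"

definition reversal :: "nat \<Rightarrow> nat \<Rightarrow> nat" where
  "reversal n x = (if x \<in> {1..n} then Suc n - x else x)"

definition rotation :: "nat \<Rightarrow> nat \<Rightarrow> nat" where
  "rotation m x = (if x = Suc m then 1 else if x \<in> {1..m} then Suc x else x)"

lemma finite_pairs_lt [simp]: "finite (pairs_lt n)"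
  by (rule finite_subset[of _ "{1..n} \<times> {1..n}"]) (auto simp: pairs_lt_def)

lemma card_pairs_lt_Suc: "card (pairs_lt (Suc m)) = card (pairs_lt m) + m"
proof -
  have "pairs_lt (Suc m) = pairs_lt m \<union> (\<lambda>p. (p, Suc m)) ` {1..m}"
    and "pairs_lt m \<inter> (\<lambda>p. (p, Suc m)) ` {1..m} = {}"
    by (auto simp: pairs_lt_def)
  moreover have "card ((\<lambda>p. (p, Suc m)) ` {1..m}) = m"
    by (subst card_image) (auto simp: inj_on_def)
  ultimately show ?thesis
    by (simp add: card_Un_disjoint)
qed

lemma inversions_subset_pairs_lt: "inversions n f \<subseteq> pairs_lt n"
  by (auto simp: inversions_def pairs_lt_def)

lemma reversal_reversal [simp]: "reversal n (reversal n x) = x"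
  by (auto simp: reversal_def)

lemma reversal_in_Sym: "reversal n \<in> Sym n"
  unfolding Sym_def mem_Collect_eq
proof (rule inj_imp_permutes)
  show "inj_on (reversal n) {1..n}"
    by (metis inj_onI reversal_reversal)
qed (auto simp: reversal_def)

lemma perm_of_upt: "perm_of [1..<Suc m] = rotation m"
proof (induction m)
  case (Suc m)
  have "perm_of [1..<Suc (Suc m)] = rotation m \<circ> adj_swap (Suc m)"
    using Suc by simp
  also have "\<dots> = rotation (Suc m)"
    by (auto simp: fun_eq_iff rotation_def adj_swap_def)
  finally show ?case .
qed (auto simp: rotation_def fun_eq_iff)

lemma perm_of_Delta: "perm_of (Delta m) = reversal m"
proof (induction m)
  case (Suc m)
  have "perm_of (Delta (Suc m)) = rotation m \<circ> reversal m"
    by (simp only: Delta.simps perm_of_append perm_of_upt Suc.IH)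
  also have "\<dots> = reversal (Suc m)"
    by (auto simp: fun_eq_iff rotation_def reversal_def)
  finally show ?case .
qed (auto simp: reversal_def fun_eq_iff)

lemma Delta_in_words: "Delta m \<in> words m"
  by (induction m) (fastforce simp: words_def gens_def)+

lemma length_Delta: "length (Delta m) = card (pairs_lt m)"
proof (induction m)
  case 0
  then show ?case by (simp add: pairs_lt_def)
qed (simp add: card_pairs_lt_Suc)

text \<open>Right multiplication by the longest permutation exchanges inversions and non-inversions.\<close>

lemma perm_length_comp_reversal:
  assumes g: "g \<in> Sym n"
  shows "perm_length n (g \<circ> reversal n) = card (pairs_lt n) - perm_length n g"
proof -
  let ?r = "\<lambda>(p, q). (reversal n q, reversal n p)"
  have "inversions n (g \<circ> reversal n) = ?r ` (pairs_lt n - inversions n g)"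
  proof (intro set_eqI iffI)
    fix x assume "x \<in> inversions n (g \<circ> reversal n)"
    then obtain p q where x: "x = (p, q)" and pq: "p \<in> {1..n}" "q \<in> {1..n}" "p < q"
      and inv: "g (reversal n q) < g (reversal n p)"
      by (auto simp: inversions_def)
    then have "(reversal n q, reversal n p) \<in> pairs_lt n - inversions n g"
      by (auto simp: pairs_lt_def inversions_def reversal_def)
    then show "x \<in> ?r ` (pairs_lt n - inversions n g)"
      using x by (auto intro: image_eqI[of _ _ "(reversal n q, reversal n p)"])
  next
    fix x assume "x \<in> ?r ` (pairs_lt n - inversions n g)"
    then obtain p q where x: "x = (reversal n q, reversal n p)"
      and pq: "p \<in> {1..n}" "q \<in> {1..n}" "p < q" and "\<not> g q < g p"
      by (auto simp: pairs_lt_def inversions_def)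
    then have "g p < g q"
      using Sym_inj_eq[OF g, of p q] by auto
    then show "x \<in> inversions n (g \<circ> reversal n)"
      using x pq by (auto simp: inversions_def reversal_def)
  qed
  moreover have "inj_on ?r A" for A
    by (auto simp: inj_on_def dest: arg_cong[of _ _ "reversal n"])
  ultimately show ?thesis
    unfolding perm_length_def
    by (simp add: card_image card_Diff_subset inversions_subset_pairs_lt)
qed

lemma perm_length_reversal: "perm_length n (reversal n) = card (pairs_lt n)"
  using perm_length_comp_reversal[OF id_in_Sym] by simp

lemma Delta_reduced: "Delta n \<in> reduced_words n"
  by (simp add: reduced_words_def Delta_in_words perm_of_Delta perm_length_reversal length_Delta)

text \<open>A reduced word \<open>w\<close> extends to a reduced word of the longest permutation \<open>reversal n\<close> by a
  reduced word of \<open>inv (perm_of w) \<circ> reversal n\<close>; conversely a prefix of a reduced word is reduced.\<close>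

theorem simple_words_eq_reduced_words: "simple_words n = reduced_words n"
proof (intro set_eqI iffI)
  fix w assume "w \<in> simple_words n"
  then obtain v where w: "w \<in> words n" and v: "v \<in> words n" and wv: "braid_eq n (w @ v) (Delta n)"
    by (auto simp: simple_words_def left_div_def)
  have "perm_of w \<circ> perm_of v = reversal n" and len: "length w + length v = card (pairs_lt n)"
    using braid_eq_invariants[OF wv] by (simp_all add: perm_of_Delta length_Delta)
  then have "card (pairs_lt n) \<le> perm_length n (perm_of w) + length v"
    using perm_length_comp_perm_of_le[OF v, of "perm_of w"] perm_length_reversal by simp
  then show "w \<in> reduced_words n"
    using w len perm_length_perm_of_le[OF w] by (simp add: reduced_words_def)
next
  fix w assume w: "w \<in> reduced_words n"
  let ?f = "perm_of w"
  have f: "?f \<in> Sym n" and wn: "w \<in> words n"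
    using w perm_of_in_Sym by (auto simp: reduced_words_def)
  obtain v where v: "v \<in> reduced_words n" "perm_of v = inv ?f \<circ> reversal n"
    using reduced_word_exists[of "inv ?f \<circ> reversal n" n] f
    by (auto intro: Sym_comp inv_in_Sym reversal_in_Sym)
  have "perm_of (w @ v) = reversal n"
    using v(2) by (simp add: comp_assoc Sym_inv_apply[OF f] fun_eq_iff)
  moreover have "length (w @ v) = card (pairs_lt n)"
    using v w perm_length_comp_reversal[OF inv_in_Sym[OF f]] perm_length_inv[OF f]
      card_mono[OF finite_pairs_lt inversions_subset_pairs_lt, of n ?f]
    by (simp add: reduced_words_def perm_length_def)
  ultimately have "braid_eq n (w @ v) (Delta n)"
    using v(1) wn by (intro matsumoto Delta_reduced)
      (auto simp: reduced_words_def perm_of_Delta perm_length_reversal)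
  then show "w \<in> simple_words n"
    using wn v(1) by (auto simp: simple_words_def left_div_def reduced_words_def)
qed

section \<open>Descent sets\<close>

definition descents :: "nat \<Rightarrow> (nat \<Rightarrow> nat) \<Rightarrow> nat set" where
  "descents n f = {i \<in> gens n. f (Suc i) < f i}"

definition left_descents :: "nat \<Rightarrow> (nat \<Rightarrow> nat) \<Rightarrow> nat set" where
  "left_descents n f = descents n (inv f)"

lemma reduced_words_braid_eq_closed:
  "braid_eq n u w \<Longrightarrow> w \<in> reduced_words n \<Longrightarrow> u \<in> words n \<Longrightarrow> u \<in> reduced_words n"
  using braid_eq_invariants[of n u w] by (simp add: reduced_words_def)

lemma DR_eq_descents:
  assumes w: "w \<in> reduced_words n"
  shows "DR n w = descents n (perm_of w)"
proof (intro set_eqI iffI)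
  fix i assume "i \<in> DR n w"
  then obtain v where i: "i \<in> gens n" and v: "v \<in> words n" and vw: "braid_eq n (v @ [i]) w"
    by (auto simp: DR_def right_div_def)
  then have "v @ [i] \<in> reduced_words n"
    using reduced_words_braid_eq_closed w by simp
  from reduced_snoc(2)[OF this] have "perm_of w (Suc i) < perm_of w i"
    unfolding conjunct1[OF braid_eq_invariants[OF vw]] .
  then show "i \<in> descents n (perm_of w)"
    using i by (simp add: descents_def)
next
  fix i assume "i \<in> descents n (perm_of w)"
  then have i: "i \<in> gens n" and desc: "perm_of w (Suc i) < perm_of w i"
    by (auto simp: descents_def)
  have "perm_of w \<circ> adj_swap i \<in> Sym n"
    using w i by (auto simp: reduced_words_def intro: Sym_comp perm_of_in_Sym adj_swap_in_Sym)
  then obtain v where v: "v \<in> reduced_words n" "perm_of v = perm_of w \<circ> adj_swap i"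
    using reduced_word_exists by blast
  have pv: "perm_of (v @ [i]) = perm_of w"
    using v(2) by (simp add: comp_assoc)
  have "perm_length n (perm_of w) = Suc (length v)"
    using v perm_length_adj_swap_descent[OF i desc] by (simp add: reduced_words_def)
  then have "v @ [i] \<in> reduced_words n"
    using v(1) i pv unfolding reduced_words_def by simp
  with pv have "braid_eq n (v @ [i]) w"
    using w by (intro matsumoto)
  then show "i \<in> DR n w"
    using v(1) i by (auto simp: DR_def right_div_def reduced_words_def)
qed

lemma left_div_rev_iff: "left_div n [i] w \<longleftrightarrow> right_div n [i] (rev w)"
proof
  assume "left_div n [i] w"
  then obtain v where "v \<in> words n" "braid_eq n ([i] @ v) w"
    by (auto simp: left_div_def)
  then show "right_div n [i] (rev w)"
    unfolding right_div_def using braid_eq_rev[of n "[i] @ v" w]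
    by (intro bexI[of _ "rev v"]) auto
next
  assume "right_div n [i] (rev w)"
  then obtain v where "v \<in> words n" "braid_eq n (v @ [i]) (rev w)"
    by (auto simp: right_div_def)
  then show "left_div n [i] w"
    unfolding left_div_def using braid_eq_rev[of n "v @ [i]" "rev w"]
    by (intro bexI[of _ "rev v"]) auto
qed

lemma DL_eq_DR_rev: "DL n w = DR n (rev w)"
  by (simp add: DL_def DR_def left_div_rev_iff)

lemma rev_reduced: "w \<in> reduced_words n \<Longrightarrow> rev w \<in> reduced_words n"
  using perm_of_rev[of w n] perm_length_inv perm_of_in_Sym
  by (auto simp: reduced_words_def)

lemma DL_eq_left_descents:
  assumes w: "w \<in> reduced_words n"
  shows "DL n w = left_descents n (perm_of w)"
proof -
  have "DL n w = descents n (perm_of (rev w))"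
    using DL_eq_DR_rev DR_eq_descents[OF rev_reduced[OF w]] by simp
  moreover have "perm_of (rev w) = inv (perm_of w)"
    using w perm_of_rev unfolding reduced_words_def by blast
  ultimately show ?thesis
    by (simp add: left_descents_def)
qed

lemma card_image_eq_if_same_fibres:
  assumes "\<And>x y. x \<in> S \<Longrightarrow> y \<in> S \<Longrightarrow> F x = F y \<longleftrightarrow> G x = G y"
  shows "card (F ` S) = card (G ` S)"
proof -
  define h where "h a = G (inv_into S F a)" for a
  have hF: "h (F x) = G x" if "x \<in> S" for x
  proof -
    have "inv_into S F (F x) \<in> S" "F (inv_into S F (F x)) = F x"
      using that by (auto intro: inv_into_into f_inv_into_f)
    then show ?thesis
      using assms that unfolding h_def by blast
  qed
  have "bij_betw h (F ` S) (G ` S)"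
  proof (rule bij_betw_imageI)
    show "inj_on h (F ` S)"
      using assms by (auto simp: inj_on_def hF)
    show "h ` F ` S = G ` S"
      using hF by (auto simp: image_iff)
  qed
  then show ?thesis
    by (rule bij_betw_same_card)
qed

lemma braid_class_eq_iff:
  assumes "x \<in> words n" "y \<in> words n"
  shows "braid_class n x = braid_class n y \<longleftrightarrow> braid_eq n x y"
proof
  assume eq: "braid_class n x = braid_class n y"
  have "y \<in> braid_class n y"
    using assms(2) by (simp add: braid_class_def)
  then have "y \<in> braid_class n x"
    unfolding eq .
  then show "braid_eq n x y"
    by (simp add: braid_class_def)
next
  assume "braid_eq n x y"
  then show "braid_class n x = braid_class n y"
    unfolding braid_class_def using braid_eq_trans braid_eq_sym by blast
qed

theorem card_simple_braids_eq_card_perms: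
  "card (braid_class n ` {w \<in> simple_words n. P (DL n w) (DR n w)})
   = card {f \<in> Sym n. P (left_descents n f) (descents n f)}"
proof -
  let ?S = "{w \<in> reduced_words n. P (DL n w) (DR n w)}"
  have "card (braid_class n ` ?S) = card (perm_of ` ?S)"
  proof (rule card_image_eq_if_same_fibres)
    fix x y assume "x \<in> ?S" "y \<in> ?S"
    then have x: "x \<in> reduced_words n" and y: "y \<in> reduced_words n"
      by simp_all
    then have "braid_class n x = braid_class n y \<longleftrightarrow> braid_eq n x y"
      by (intro braid_class_eq_iff) (simp_all add: reduced_words_def)
    then show "braid_class n x = braid_class n y \<longleftrightarrow> perm_of x = perm_of y"
      using braid_eq_invariants matsumoto[OF x y] by blast
  qed
  also have "perm_of ` ?S = {f \<in> Sym n. P (left_descents n f) (descents n f)}"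
  proof (intro set_eqI iffI)
    fix f assume "f \<in> perm_of ` ?S"
    then obtain w where "w \<in> reduced_words n" "P (DL n w) (DR n w)" "f = perm_of w"
      by blast
    then show "f \<in> {f \<in> Sym n. P (left_descents n f) (descents n f)}"
      using perm_of_in_Sym by (simp add: DL_eq_left_descents DR_eq_descents reduced_words_def)
  next
    fix f assume f: "f \<in> {f \<in> Sym n. P (left_descents n f) (descents n f)}"
    then obtain w where "w \<in> reduced_words n" "perm_of w = f"
      using reduced_word_exists by blast
    with f show "f \<in> perm_of ` ?S"
      by (auto simp: DL_eq_left_descents DR_eq_descents)
  qed
  finally show ?thesis
    by (simp add: simple_words_eq_reduced_words)
qed

section \<open>Double cosets of Young subgroups\<close>

text \<open>The blocks of \<open>K \<subseteq> {1..n-1}\<close> are the maximal intervals \<open>{p..q}\<close> of \<open>{1..n}\<close> with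
  \<open>{p..<q} \<subseteq> K\<close>; \<open>block_index K p\<close> numbers them from 0.\<close>

definition block_index :: "nat set \<Rightarrow> nat \<Rightarrow> nat" where
  "block_index K p = card ({1..<p} - K)"

definition Young :: "nat \<Rightarrow> nat set \<Rightarrow> (nat \<Rightarrow> nat) set" where
  "Young n K = {w \<in> Sym n. \<forall>p \<in> {1..n}. block_index K (w p) = block_index K p}"

definition double_coset :: "nat \<Rightarrow> nat set \<Rightarrow> nat set \<Rightarrow> (nat \<Rightarrow> nat) \<Rightarrow> (nat \<Rightarrow> nat) set" where
  "double_coset n I J x = {u \<circ> x \<circ> w | u w. u \<in> Young n I \<and> w \<in> Young n J}"

definition perms_with_descents :: "nat \<Rightarrow> nat set \<Rightarrow> nat set \<Rightarrow> (nat \<Rightarrow> nat) set" where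
  "perms_with_descents n I J = {f \<in> Sym n. I \<subseteq> left_descents n f \<and> J \<subseteq> descents n f}"

definition block :: "nat \<Rightarrow> nat set \<Rightarrow> nat \<Rightarrow> nat set" where
  "block n J p = {q \<in> {1..n}. block_index J q = block_index J p}"

definition blocks :: "nat \<Rightarrow> nat set \<Rightarrow> nat set set" where
  "blocks n J = block n J ` {1..n}"

lemma blocks_partition:
  "finite (blocks n J)" "\<forall>X \<in> blocks n J. finite X" "pairwise disjnt (blocks n J)"
  "\<Union>(blocks n J) = {1..n}"
  by (auto simp: blocks_def block_def pairwise_def disjnt_def)

lemma block_index_add:
  assumes "1 \<le> p" "p \<le> q"
  shows "block_index K q = block_index K p + card ({p..<q} - K)"
proof -
  have "{1..<q} - K = ({1..<p} - K) \<union> ({p..<q} - K)"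
    using assms by auto
  moreover have "({1..<p} - K) \<inter> ({p..<q} - K) = {}"
    by auto
  ultimately show ?thesis
    unfolding block_index_def by (simp add: card_Un_disjoint)
qed

lemma block_index_mono: "1 \<le> p \<Longrightarrow> p \<le> q \<Longrightarrow> block_index K p \<le> block_index K q"
  using block_index_add[of p q K] by linarith

lemma block_index_eq_iff:
  assumes "1 \<le> p" "p \<le> q"
  shows "block_index K p = block_index K q \<longleftrightarrow> {p..<q} \<subseteq> K"
proof -
  have "block_index K p = block_index K q \<longleftrightarrow> card ({p..<q} - K) = 0"
    using block_index_add[OF assms, of K] by linarith
  then show ?thesis
    by simp
qed

lemma decreasing_on_interval:
  fixes h :: "nat \<Rightarrow> 'a::order"
  assumes "\<And>i. p \<le> i \<Longrightarrow> i < q \<Longrightarrow> h (Suc i) < h i" and "p < q"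
  shows "h q < h p"
  using assms
proof (induction q)
  case (Suc q)
  show ?case
  proof (cases "p = q")
    case False
    then have "h q < h p" and "h (Suc q) < h q"
      using Suc by auto
    then show ?thesis
      by (rule less_trans[rotated])
  qed (use Suc in auto)
qed simp

lemma descents_block_decreasing:
  assumes "K \<subseteq> descents n h" and "p \<in> {1..n}" "q \<in> {1..n}" "p < q"
    and "block_index K p = block_index K q"
  shows "h q < h p"
proof (rule decreasing_on_interval[OF _ \<open>p < q\<close>])
  fix i assume "p \<le> i" "i < q"
  moreover have "{p..<q} \<subseteq> K"
    using assms block_index_eq_iff[of p q K] by auto
  ultimately have "i \<in> descents n h"
    using assms(1) by auto
  then show "h (Suc i) < h i"
    by (simp add: descents_def)
qed

lemma Young_in_Sym: "w \<in> Young n K \<Longrightarrow> w \<in> Sym n"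
  by (simp add: Young_def)

lemma id_in_Young: "id \<in> Young n K"
  by (simp add: Young_def id_in_Sym)

lemma Young_comp:
  assumes v: "v \<in> Young n K" and w: "w \<in> Young n K"
  shows "v \<circ> w \<in> Young n K"
proof -
  have "block_index K (v (w p)) = block_index K p" if "p \<in> {1..n}" for p
    using v w Sym_range[OF Young_in_Sym[OF w] that] that by (simp add: Young_def)
  then show ?thesis
    using v w by (simp add: Young_def Sym_comp)
qed

lemma inv_in_Young:
  assumes w: "w \<in> Young n K"
  shows "inv w \<in> Young n K"
proof -
  have wS: "w \<in> Sym n"
    using w by (simp add: Young_def)
  have "block_index K (inv w p) = block_index K p" if p: "p \<in> {1..n}" for p
  proof -
    have "block_index K (w (inv w p)) = block_index K (inv w p)"
      using w Sym_range[OF inv_in_Sym[OF wS] p] by (simp add: Young_def)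
    then show ?thesis
      by (simp add: Sym_inv_apply(1)[OF wS])
  qed
  then show ?thesis
    using inv_in_Sym[OF wS] by (simp add: Young_def)
qed

lemma adj_swap_in_Young:
  assumes "j \<in> K" "j \<in> gens n"
  shows "adj_swap j \<in> Young n K"
proof -
  have "block_index K j = block_index K (Suc j)"
    using block_index_eq_iff[of j "Suc j" K] assms by (auto simp: gens_iff)
  then have "block_index K (adj_swap j p) = block_index K p" for p
    by (simp add: adj_swap_def)
  then show ?thesis
    using adj_swap_in_Sym[OF assms(2)] by (simp add: Young_def)
qed

lemma double_coset_subset_Sym: "x \<in> Sym n \<Longrightarrow> double_coset n I J x \<subseteq> Sym n"
  unfolding double_coset_def by (auto intro!: Sym_comp dest: Young_in_Sym)

lemma in_double_coset_self: "x \<in> double_coset n I J x"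
proof -
  have "x = id \<circ> x \<circ> id"
    by simp
  then show ?thesis
    unfolding double_coset_def using id_in_Young by blast
qed

lemma double_coset_eq:
  assumes "y \<in> double_coset n I J x"
  shows "double_coset n I J y = double_coset n I J x"
proof -
  obtain u w where u: "u \<in> Young n I" and w: "w \<in> Young n J" and y: "y = u \<circ> x \<circ> w"
    using assms by (auto simp: double_coset_def)
  have uS: "u \<in> Sym n" and wS: "w \<in> Sym n"
    using u w by (auto simp: Young_def)
  show ?thesis
  proof (intro set_eqI iffI)
    fix z assume "z \<in> double_coset n I J y"
    then obtain u' w' where u': "u' \<in> Young n I" and w': "w' \<in> Young n J" and "z = u' \<circ> y \<circ> w'"
      by (auto simp: double_coset_def)
    then have "z = (u' \<circ> u) \<circ> x \<circ> (w \<circ> w')"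
      using y by (simp add: comp_assoc)
    then show "z \<in> double_coset n I J x"
      unfolding double_coset_def using Young_comp[OF u' u] Young_comp[OF w w'] by blast
  next
    fix z assume "z \<in> double_coset n I J x"
    then obtain u' w' where u': "u' \<in> Young n I" and w': "w' \<in> Young n J" and z: "z = u' \<circ> x \<circ> w'"
      by (auto simp: double_coset_def)
    have "z = (u' \<circ> inv u) \<circ> y \<circ> (inv w \<circ> w')"
      unfolding z y by (simp add: fun_eq_iff Sym_inv_apply[OF uS] Sym_inv_apply[OF wS])
    then show "z \<in> double_coset n I J y"
      unfolding double_coset_def
      using Young_comp[OF u' inv_in_Young[OF u]] Young_comp[OF inv_in_Young[OF w] w'] by blast
  qed
qed

lemma perm_length_adj_swap_comp_ascent:
  assumes f: "f \<in> Sym n" and "i \<in> gens n" and "inv f i < inv f (Suc i)"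
  shows "perm_length n (adj_swap i \<circ> f) = perm_length n f + 1"
proof -
  have "inv (adj_swap i \<circ> f) = inv f \<circ> adj_swap i"
    using f o_inv_distrib[OF bij_adj_swap, of f i] by (simp add: Sym_def permutes_bij)
  moreover have "adj_swap i \<circ> f \<in> Sym n"
    using assms by (intro Sym_comp adj_swap_in_Sym)
  ultimately have "perm_length n (adj_swap i \<circ> f) = perm_length n (inv f \<circ> adj_swap i)"
    using perm_length_inv by metis
  also have "\<dots> = perm_length n f + 1"
    using perm_length_adj_swap_ascent[OF assms(2,3)] perm_length_inv[OF f] by simp
  finally show ?thesis .
qed

text \<open>An ascent of \<open>f\<close> in a position of \<open>J\<close> (or of \<open>inv f\<close> in a position of \<open>I\<close>) would give
  a longer element \<open>f \<circ> adj_swap j\<close> (or \<open>adj_swap i \<circ> f\<close>) of the double coset.\<close>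

lemma longest_in_double_coset:
  assumes f: "f \<in> Sym n" and I: "I \<subseteq> gens n" and J: "J \<subseteq> gens n"
    and longest: "\<And>y. y \<in> double_coset n I J f \<Longrightarrow> perm_length n y \<le> perm_length n f"
  shows "f \<in> perms_with_descents n I J"
proof -
  have "j \<in> descents n f" if "j \<in> J" for j
  proof (rule ccontr)
    assume "j \<notin> descents n f"
    then have asc: "f j < f (Suc j)" and j: "j \<in> gens n"
      using that J Sym_ascent_or_descent[OF f, of j] by (auto simp: descents_def)
    have "f \<circ> adj_swap j = id \<circ> f \<circ> adj_swap j"
      by simp
    then have "f \<circ> adj_swap j \<in> double_coset n I J f"
      unfolding double_coset_def using id_in_Young adj_swap_in_Young[OF that j] by blast
    then show False
      using longest perm_length_adj_swap_ascent[OF j asc] by fastforce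
  qed
  moreover have "i \<in> left_descents n f" if "i \<in> I" for i
  proof (rule ccontr)
    assume "i \<notin> left_descents n f"
    then have asc: "inv f i < inv f (Suc i)" and i: "i \<in> gens n"
      using that I Sym_ascent_or_descent[OF inv_in_Sym[OF f], of i]
      by (auto simp: left_descents_def descents_def)
    have "adj_swap i \<circ> f = adj_swap i \<circ> f \<circ> id"
      by simp
    then have "adj_swap i \<circ> f \<in> double_coset n I J f"
      unfolding double_coset_def using id_in_Young adj_swap_in_Young[OF that i] by blast
    then show False
      using longest perm_length_adj_swap_comp_ascent[OF f i asc] by fastforce
  qed
  ultimately show ?thesis
    using f by (auto simp: perms_with_descents_def)
qed

lemma double_coset_meets_perms_with_descents:
  assumes x: "x \<in> Sym n" and I: "I \<subseteq> gens n" and J: "J \<subseteq> gens n"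
  obtains f where "f \<in> double_coset n I J x" "f \<in> perms_with_descents n I J"
proof -
  let ?D = "double_coset n I J x"
  have fin: "finite ?D"
    using double_coset_subset_Sym[OF x] finite_Sym finite_subset by blast
  have "Max (perm_length n ` ?D) \<in> perm_length n ` ?D"
    using fin in_double_coset_self by (intro Max_in) blast+
  then obtain f where fD: "f \<in> ?D" and fM: "perm_length n f = Max (perm_length n ` ?D)"
    by auto
  have "perm_length n y \<le> perm_length n f" if "y \<in> double_coset n I J f" for y
    unfolding fM using fin that double_coset_eq[OF fD] by (intro Max_ge) auto
  then have "f \<in> perms_with_descents n I J"
    using fD double_coset_subset_Sym[OF x] by (intro longest_in_double_coset I J) blast+
  with fD show ?thesis
    by (rule that)
qed

lemma downward_closed_eq_if_card_eq:
  fixes A B K :: "'a::linorder set"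
  assumes "finite K" and "A \<subseteq> K" and "B \<subseteq> K"
    and down_A: "\<And>p q. q \<in> A \<Longrightarrow> p \<in> K \<Longrightarrow> p < q \<Longrightarrow> p \<in> A"
    and down_B: "\<And>p q. q \<in> B \<Longrightarrow> p \<in> K \<Longrightarrow> p < q \<Longrightarrow> p \<in> B"
    and "card A = card B"
  shows "A = B"
proof -
  have "A \<subseteq> B \<or> B \<subseteq> A"
  proof (rule ccontr)
    assume "\<not> ?thesis"
    then obtain a b where a: "a \<in> A" "a \<notin> B" and b: "b \<in> B" "b \<notin> A"
      by blast
    then show False
      using down_A[OF a(1), of b] down_B[OF b(1), of a] assms(2,3)
      by (cases a b rule: linorder_cases) auto
  qed
  moreover have "finite A" "finite B"
    using assms(1-3) finite_subset by auto
  ultimately show ?thesis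
    using \<open>card A = card B\<close> card_subset_eq by metis
qed

text \<open>The superlevel sets of both functions are initial segments of \<open>K\<close> of equal size.\<close>

lemma antitone_rearrangement_eq:
  fixes \<phi> \<psi> :: "'a::linorder \<Rightarrow> 'b::linorder"
  assumes fin: "finite K" and w: "bij_betw w K K" and \<psi>: "\<And>q. q \<in> K \<Longrightarrow> \<psi> q = \<phi> (w q)"
    and anti_\<phi>: "\<And>p q. p \<in> K \<Longrightarrow> q \<in> K \<Longrightarrow> p < q \<Longrightarrow> \<phi> q \<le> \<phi> p"
    and anti_\<psi>: "\<And>p q. p \<in> K \<Longrightarrow> q \<in> K \<Longrightarrow> p < q \<Longrightarrow> \<psi> q \<le> \<psi> p"
    and q: "q \<in> K"
  shows "\<psi> q = \<phi> q"
proof -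
  have level: "{p \<in> K. t \<le> \<psi> p} = {p \<in> K. t \<le> \<phi> p}" for t
  proof (rule downward_closed_eq_if_card_eq[OF fin])
    have wK: "w ` K = K"
      using w by (simp add: bij_betw_def)
    have image: "w ` {p \<in> K. t \<le> \<psi> p} = {p \<in> K. t \<le> \<phi> p}"
    proof (intro set_eqI iffI)
      fix a assume "a \<in> w ` {p \<in> K. t \<le> \<psi> p}"
      then obtain p where "p \<in> K" "t \<le> \<psi> p" "a = w p"
        by blast
      then show "a \<in> {p \<in> K. t \<le> \<phi> p}"
        using wK \<psi> by auto
    next
      fix a assume "a \<in> {p \<in> K. t \<le> \<phi> p}"
      moreover obtain p where "p \<in> K" "a = w p"
        using wK calculation by blast
      ultimately show "a \<in> w ` {p \<in> K. t \<le> \<psi> p}"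
        using \<psi> by auto
    qed
    have "inj_on w {p \<in> K. t \<le> \<psi> p}"
      using w inj_on_subset[of w K] by (simp add: bij_betw_def)
    from card_image[OF this] show "card {p \<in> K. t \<le> \<psi> p} = card {p \<in> K. t \<le> \<phi> p}"
      unfolding image by simp
  next
    fix p r assume "r \<in> {p \<in> K. t \<le> \<psi> p}" "p \<in> K" "p < r"
    then show "p \<in> {p \<in> K. t \<le> \<psi> p}"
      using anti_\<psi>[of p r] by auto
  next
    fix p r assume "r \<in> {p \<in> K. t \<le> \<phi> p}" "p \<in> K" "p < r"
    then show "p \<in> {p \<in> K. t \<le> \<phi> p}"
      using anti_\<phi>[of p r] by auto
  qed auto
  have "q \<in> {p \<in> K. \<psi> q \<le> \<phi> p}" and "q \<in> {p \<in> K. \<phi> q \<le> \<psi> p}"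
    using level[of "\<psi> q"] level[of "\<phi> q"] q by blast+
  then show ?thesis
    by (simp add: antisym)
qed

lemma eq_if_card_greater_eq:
  fixes x y :: "'a::linorder"
  assumes "finite A" and "x \<in> A" and "y \<in> A" and "card {v \<in> A. x < v} = card {v \<in> A. y < v}"
  shows "x = y"
proof -
  have "card {v \<in> A. b < v} < card {v \<in> A. a < v}" if "a < b" "b \<in> A" for a b
    using that \<open>finite A\<close> by (intro psubset_card_mono) auto
  from this[of x y] this[of y x] show ?thesis
    using assms(2-4) by (cases x y rule: linorder_cases) simp_all
qed

lemma left_descents_block_order:
  assumes h: "h \<in> Sym n" and I: "I \<subseteq> left_descents n h" and pq: "p \<in> {1..n}" "q \<in> {1..n}"
    and block: "block_index I (h p) = block_index I (h q)"
  shows "p < q \<longleftrightarrow> h q < h p"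
proof -
  have I': "I \<subseteq> descents n (inv h)"
    using I by (simp add: left_descents_def)
  have "inv h (h p) < inv h (h q)" if "h q < h p"
    using descents_block_decreasing[OF I' Sym_range[OF h pq(2)] Sym_range[OF h pq(1)] that] block
    by simp
  then have "h q < h p \<Longrightarrow> p < q" and "h p < h q \<Longrightarrow> q < p"
    using descents_block_decreasing[OF I' Sym_range[OF h pq(1)] Sym_range[OF h pq(2)]] block
    by (simp_all add: Sym_inv_apply(2)[OF h])
  moreover have "h p \<noteq> h q" if "p \<noteq> q"
    using Sym_inj_eq[OF h] that by simp
  ultimately show ?thesis
    using less_asym by (cases p q rule: linorder_cases) (auto simp: linorder_neq_iff)
qed

text \<open>By \<open>left_descents_block_order\<close>, \<open>h\<close> maps the positions before \<open>q\<close> whose image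
  lies in the block of \<open>h q\<close> onto the values of that block above \<open>h q\<close>.\<close>

lemma card_greater_in_block:
  assumes h: "h \<in> Sym n" and I: "I \<subseteq> left_descents n h" and q: "q \<in> {1..n}"
  shows "card {v \<in> {1..n}. block_index I v = block_index I (h q) \<and> h q < v}
       = card {q' \<in> {1..n}. block_index I (h q') = block_index I (h q) \<and> q' < q}"
proof -
  let ?Q = "{q' \<in> {1..n}. block_index I (h q') = block_index I (h q) \<and> q' < q}"
  have "h ` ?Q = {v \<in> {1..n}. block_index I v = block_index I (h q) \<and> h q < v}"
  proof
    show "h ` ?Q \<subseteq> {v \<in> {1..n}. block_index I v = block_index I (h q) \<and> h q < v}"
      using left_descents_block_order[OF h I _ q] Sym_range[OF h] by auto
    show "{v \<in> {1..n}. block_index I v = block_index I (h q) \<and> h q < v} \<subseteq> h ` ?Q"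
    proof
      fix v assume v: "v \<in> {v \<in> {1..n}. block_index I v = block_index I (h q) \<and> h q < v}"
      have "inv h v \<in> ?Q"
        using v left_descents_block_order[OF h I _ q, of "inv h v"] Sym_range[OF inv_in_Sym[OF h]]
        by (simp add: Sym_inv_apply(1)[OF h])
      moreover have "v = h (inv h v)"
        by (simp add: Sym_inv_apply(1)[OF h])
      ultimately show "v \<in> h ` ?Q"
        by (rule rev_image_eqI)
    qed
  qed
  moreover have "inj_on h ?Q"
    using Sym_inj_eq[OF h] by (simp add: inj_on_def)
  ultimately show ?thesis
    using card_image by fastforce
qed

text \<open>On each block of \<open>J\<close> both \<open>f\<close> and \<open>g\<close> are decreasing, and \<open>block_index I \<circ> g\<close> is the
  rearrangement of \<open>block_index I \<circ> f\<close> by \<open>w\<close>.\<close>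

lemma same_blocks_in_double_coset:
  assumes f: "f \<in> perms_with_descents n I J" and g: "g \<in> perms_with_descents n I J"
    and u: "u \<in> Young n I" and w: "w \<in> Young n J" and g_eq: "g = u \<circ> f \<circ> w"
    and p: "p \<in> {1..n}"
  shows "block_index I (g p) = block_index I (f p)"
proof -
  have fS: "f \<in> Sym n" and gS: "g \<in> Sym n" and wS: "w \<in> Sym n"
    and fJ: "J \<subseteq> descents n f" and gJ: "J \<subseteq> descents n g"
    using f g w by (auto simp: perms_with_descents_def Young_def)
  define K where "K = block n J p"
  have "w ` K \<subseteq> K"
    using w Sym_range[OF wS] by (auto simp: K_def block_def Young_def)
  moreover have "inj_on w K"
    using Sym_inj_eq[OF wS] by (auto simp: inj_on_def)
  ultimately have bij: "bij_betw w K K"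
    using endo_inj_surj[of K w] by (simp add: K_def block_def bij_betw_def)
  have g_f: "block_index I (g q) = block_index I (f (w q))" if "q \<in> K" for q
    using that u g_eq Sym_range[OF fS Sym_range[OF wS]] by (simp add: K_def block_def Young_def)
  have antitone: "block_index I (h q) \<le> block_index I (h p)"
    if "h \<in> Sym n" "J \<subseteq> descents n h" "p \<in> K" "q \<in> K" "p < q" for h p q
    using that descents_block_decreasing[of J n h p q] Sym_range[of h n q]
    by (intro block_index_mono) (auto simp: K_def block_def)
  show ?thesis
    by (rule antitone_rearrangement_eq[where \<psi> = "\<lambda>q. block_index I (g q)"
          and \<phi> = "\<lambda>q. block_index I (f q)", OF _ bij g_f antitone[OF fS fJ] antitone[OF gS gJ]])
      (use p in \<open>simp_all add: K_def block_def\<close>)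
qed

lemma perms_with_descents_unique_in_double_coset:
  assumes f: "f \<in> perms_with_descents n I J" and g: "g \<in> perms_with_descents n I J"
    and "g \<in> double_coset n I J f"
  shows "f = g"
proof (rule ext)
  obtain u w where uw: "u \<in> Young n I" "w \<in> Young n J" "g = u \<circ> f \<circ> w"
    using assms(3) by (auto simp: double_coset_def)
  have fS: "f \<in> Sym n" and gS: "g \<in> Sym n"
    and fI: "I \<subseteq> left_descents n f" and gI: "I \<subseteq> left_descents n g"
    using f g by (auto simp: perms_with_descents_def)
  note blocks = same_blocks_in_double_coset[OF f g uw]
  fix q
  show "f q = g q"
  proof (cases "q \<in> {1..n}")
    case True
    define A where "A = {v \<in> {1..n}. block_index I v = block_index I (f q)}"
    have above: "{v \<in> A. x < v} = {v \<in> {1..n}. block_index I v = block_index I (f q) \<and> x < v}" for x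
      by (auto simp: A_def)
    have "{q' \<in> {1..n}. block_index I (g q') = block_index I (g q) \<and> q' < q}
        = {q' \<in> {1..n}. block_index I (f q') = block_index I (f q) \<and> q' < q}"
      using blocks True by auto
    then have "card {v \<in> A. f q < v} = card {v \<in> A. g q < v}"
      unfolding above
      using card_greater_in_block[OF fS fI True] card_greater_in_block[OF gS gI True]
        blocks[OF True]
      by simp
    moreover have "f q \<in> A" "g q \<in> A"
      using Sym_range[OF fS True] Sym_range[OF gS True] blocks[OF True] by (simp_all add: A_def)
    moreover have "finite A"
      by (simp add: A_def)
    ultimately show ?thesis
      using eq_if_card_greater_eq by blast
  qed (simp add: Sym_fixed[OF fS] Sym_fixed[OF gS])
qed

theorem card_perms_with_descents_eq_card_double_cosets:
  assumes "I \<subseteq> gens n" and "J \<subseteq> gens n"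
  shows "card (perms_with_descents n I J) = card (double_coset n I J ` Sym n)"
proof -
  have "inj_on (double_coset n I J) (perms_with_descents n I J)"
  proof (rule inj_onI)
    fix f g assume f: "f \<in> perms_with_descents n I J" and g: "g \<in> perms_with_descents n I J"
      and eq: "double_coset n I J f = double_coset n I J g"
    have "g \<in> double_coset n I J f"
      unfolding eq by (rule in_double_coset_self)
    then show "f = g"
      by (rule perms_with_descents_unique_in_double_coset[OF f g])
  qed
  moreover have "double_coset n I J ` perms_with_descents n I J = double_coset n I J ` Sym n"
  proof (intro set_eqI iffI)
    fix E assume "E \<in> double_coset n I J ` Sym n"
    then obtain x where x: "x \<in> Sym n" "E = double_coset n I J x"
      by auto
    obtain f where "f \<in> double_coset n I J x" "f \<in> perms_with_descents n I J"
      using double_coset_meets_perms_with_descents[OF x(1) assms] .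
    then show "E \<in> double_coset n I J ` perms_with_descents n I J"
      using double_coset_eq x(2) by blast
  qed (auto simp: perms_with_descents_def)
  ultimately show ?thesis
    using card_image by fastforce
qed

section \<open>Inversion and conjugation of double cosets\<close>

lemma inv_in_perms_with_descents:
  assumes "f \<in> perms_with_descents n I J"
  shows "inv f \<in> perms_with_descents n J I"
proof -
  have f: "f \<in> Sym n"
    using assms by (simp add: perms_with_descents_def)
  then show ?thesis
    using assms inv_in_Sym[OF f]
    by (simp add: perms_with_descents_def left_descents_def Sym_inv_inv[OF f])
qed

lemma card_perms_with_descents_commute:
  "card (perms_with_descents n I J) = card (perms_with_descents n J I)"
proof -
  have "inj_on inv (perms_with_descents n I J)"
  proof (rule inj_onI)
    fix f g assume "f \<in> perms_with_descents n I J" "g \<in> perms_with_descents n I J"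
      and eq: "inv f = inv g"
    then have "f \<in> Sym n" "g \<in> Sym n"
      by (simp_all add: perms_with_descents_def)
    then show "f = g"
      using Sym_inv_inv eq by metis
  qed
  moreover have "inv ` perms_with_descents n I J = perms_with_descents n J I"
  proof (intro set_eqI iffI)
    fix g assume g: "g \<in> perms_with_descents n J I"
    then have "g \<in> Sym n"
      by (simp add: perms_with_descents_def)
    then have "g = inv (inv g)"
      by (simp add: Sym_inv_inv)
    then show "g \<in> inv ` perms_with_descents n I J"
      using inv_in_perms_with_descents[OF g] by blast
  qed (use inv_in_perms_with_descents in blast)
  ultimately show ?thesis
    using card_image by fastforce
qed

definition maps_blocks :: "nat \<Rightarrow> nat set \<Rightarrow> nat set \<Rightarrow> (nat \<Rightarrow> nat) \<Rightarrow> bool" where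
  "maps_blocks n J J' c \<longleftrightarrow> c \<in> Sym n \<and> (\<forall>p \<in> {1..n}. \<forall>q \<in> {1..n}.
     block_index J' (c p) = block_index J' (c q) \<longleftrightarrow> block_index J p = block_index J q)"

lemma maps_blocks_inv:
  assumes "maps_blocks n J J' c"
  shows "maps_blocks n J' J (inv c)"
proof -
  have c: "c \<in> Sym n"
    using assms by (simp add: maps_blocks_def)
  have "block_index J (inv c p) = block_index J (inv c q) \<longleftrightarrow> block_index J' p = block_index J' q"
    if "p \<in> {1..n}" "q \<in> {1..n}" for p q
  proof -
    have "inv c p \<in> {1..n}" "inv c q \<in> {1..n}"
      using that Sym_range[OF inv_in_Sym[OF c]] by blast+
    then have "block_index J' (c (inv c p)) = block_index J' (c (inv c q))
        \<longleftrightarrow> block_index J (inv c p) = block_index J (inv c q)"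
      using assms by (simp add: maps_blocks_def)
    then show ?thesis
      by (simp add: Sym_inv_apply(1)[OF c])
  qed
  then show ?thesis
    using inv_in_Sym[OF c] by (simp add: maps_blocks_def)
qed

lemma conj_in_Young:
  assumes c: "maps_blocks n J J' c" and w: "w \<in> Young n J"
  shows "c \<circ> w \<circ> inv c \<in> Young n J'"
proof -
  have cS: "c \<in> Sym n" and wS: "w \<in> Sym n"
    using c w by (simp_all add: maps_blocks_def Young_def)
  have "block_index J' (c (w (inv c q))) = block_index J' q" if q: "q \<in> {1..n}" for q
  proof -
    have p: "inv c q \<in> {1..n}"
      by (rule Sym_range[OF inv_in_Sym[OF cS] q])
    then have "block_index J (w (inv c q)) = block_index J (inv c q)"
      using w by (simp add: Young_def)
    then have "block_index J' (c (w (inv c q))) = block_index J' (c (inv c q))"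
      using c Sym_range[OF wS p] p by (simp add: maps_blocks_def)
    then show ?thesis
      by (simp add: Sym_inv_apply(1)[OF cS])
  qed
  moreover have "c \<circ> w \<circ> inv c \<in> Sym n"
    by (intro Sym_comp cS wS inv_in_Sym)
  ultimately show ?thesis
    by (simp add: Young_def)
qed

lemma double_coset_conj:
  assumes c: "maps_blocks n J J' c"
  shows "double_coset n I J' (x \<circ> inv c) = (\<lambda>y. y \<circ> inv c) ` double_coset n I J x"
proof -
  have cS: "c \<in> Sym n"
    using c by (simp add: maps_blocks_def)
  show ?thesis
  proof (intro set_eqI iffI)
    fix z assume "z \<in> double_coset n I J' (x \<circ> inv c)"
    then obtain u w where u: "u \<in> Young n I" and w: "w \<in> Young n J'"
      and z: "z = u \<circ> (x \<circ> inv c) \<circ> w"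
      by (auto simp: double_coset_def)
    have "z = (u \<circ> x \<circ> (inv c \<circ> w \<circ> inv (inv c))) \<circ> inv c"
      unfolding z by (simp add: fun_eq_iff Sym_inv_apply[OF cS] Sym_inv_inv[OF cS])
    moreover have "u \<circ> x \<circ> (inv c \<circ> w \<circ> inv (inv c)) \<in> double_coset n I J x"
      unfolding double_coset_def using u conj_in_Young[OF maps_blocks_inv[OF c] w] by blast
    ultimately show "z \<in> (\<lambda>y. y \<circ> inv c) ` double_coset n I J x"
      by blast
  next
    fix z assume "z \<in> (\<lambda>y. y \<circ> inv c) ` double_coset n I J x"
    then obtain u w where u: "u \<in> Young n I" and w: "w \<in> Young n J" and z: "z = (u \<circ> x \<circ> w) \<circ> inv c"
      by (auto simp: double_coset_def)
    have "z = u \<circ> (x \<circ> inv c) \<circ> (c \<circ> w \<circ> inv c)"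
      unfolding z by (simp add: fun_eq_iff Sym_inv_apply[OF cS])
    then show "z \<in> double_coset n I J' (x \<circ> inv c)"
      unfolding double_coset_def using u conj_in_Young[OF c w] by blast
  qed
qed

lemma card_double_cosets_conj:
  assumes c: "maps_blocks n J J' c"
  shows "card (double_coset n I J ` Sym n) = card (double_coset n I J' ` Sym n)"
proof -
  have cS: "c \<in> Sym n"
    using c by (simp add: maps_blocks_def)
  define \<Psi> where "\<Psi> E = (\<lambda>y. y \<circ> inv c) ` E" for E :: "(nat \<Rightarrow> nat) set"
  have inj: "inj (\<lambda>y :: nat \<Rightarrow> nat. y \<circ> inv c)"
  proof (rule injI)
    fix y y' :: "nat \<Rightarrow> nat" assume "y \<circ> inv c = y' \<circ> inv c"
    then have "y \<circ> inv c \<circ> c = y' \<circ> inv c \<circ> c"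
      by simp
    then show "y = y'"
      by (simp add: fun_eq_iff Sym_inv_apply[OF cS])
  qed
  have "inj_on \<Psi> X" for X
    unfolding \<Psi>_def using inj_image_eq_iff[OF inj] by (auto simp: inj_on_def)
  moreover have "\<Psi> ` (double_coset n I J ` Sym n) = double_coset n I J' ` Sym n"
  proof (intro set_eqI iffI)
    fix E assume "E \<in> \<Psi> ` (double_coset n I J ` Sym n)"
    then obtain x where x: "x \<in> Sym n" "E = double_coset n I J' (x \<circ> inv c)"
      using double_coset_conj[OF c] by (auto simp: \<Psi>_def)
    moreover have "x \<circ> inv c \<in> Sym n"
      by (rule Sym_comp[OF x(1) inv_in_Sym[OF cS]])
    ultimately show "E \<in> double_coset n I J' ` Sym n"
      by blast
  next
    fix E assume "E \<in> double_coset n I J' ` Sym n"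
    then obtain x where x: "x \<in> Sym n" "E = double_coset n I J' x"
      by auto
    have "x \<circ> c \<circ> inv c = x"
      by (simp add: fun_eq_iff Sym_inv_apply[OF cS])
    then have "E = \<Psi> (double_coset n I J (x \<circ> c))"
      unfolding \<Psi>_def using double_coset_conj[OF c, of I "x \<circ> c"] x(2) by simp
    then show "E \<in> \<Psi> ` (double_coset n I J ` Sym n)"
      using Sym_comp[OF x(1) cS] by blast
  qed
  ultimately show ?thesis
    by (metis card_image)
qed

section \<open>Blocks and compositions\<close>

lemma image_mset_card_insert_eq:
  assumes "finite P" "X \<notin> P" "finite Q"
    and "image_mset card (mset_set (insert X P)) = image_mset card (mset_set Q)"
  obtains Y where "Y \<in> Q" "card Y = card X"
    "image_mset card (mset_set P) = image_mset card (mset_set (Q - {Y}))"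
proof -
  have "card X \<in># image_mset card (mset_set Q)"
    using assms(1,2,4) by (metis image_mset_add_mset mset_set.insert union_single_eq_member)
  then obtain Y where Y: "Y \<in> Q" "card Y = card X"
    using assms(3) by auto
  moreover have "mset_set Q = add_mset Y (mset_set (Q - {Y}))"
    using Y(1) assms(3) by (simp add: mset_set.remove)
  ultimately show ?thesis
    using that assms by simp
qed

lemma bij_betw_partitions_same_sizes:
  assumes "finite P" "\<forall>X \<in> P. finite X" "pairwise disjnt P"
    and "finite Q" "\<forall>Y \<in> Q. finite Y" "pairwise disjnt Q"
    and "image_mset card (mset_set P) = image_mset card (mset_set Q)"
  shows "\<exists>c. bij_betw c (\<Union>P) (\<Union>Q) \<and> (\<forall>X \<in> P. c ` X \<in> Q)"
  using assms
proof (induction P arbitrary: Q rule: finite_induct)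
  case empty
  then have "mset_set Q = {#}"
    by simp
  then have "Q = {}"
    using empty.prems(3) mset_set_empty_iff by blast
  then show ?case
    by (auto simp: bij_betw_def)
next
  case (insert X P Q)
  obtain Y where Y: "Y \<in> Q" "card Y = card X"
    and sizes: "image_mset card (mset_set P) = image_mset card (mset_set (Q - {Y}))"
    using image_mset_card_insert_eq[OF insert.hyps insert.prems(3,6)] .
  have "\<forall>X \<in> P. finite X" "pairwise disjnt P"
    using insert.prems(1,2) pairwise_subset[of disjnt "insert X P" P] by auto
  moreover have "finite (Q - {Y})" "\<forall>Y \<in> Q - {Y}. finite Y" "pairwise disjnt (Q - {Y})"
    using insert.prems(3-5) pairwise_subset[of disjnt Q "Q - {Y}"] by auto
  ultimately obtain c where c: "bij_betw c (\<Union>P) (\<Union>(Q - {Y}))" "\<forall>Z \<in> P. c ` Z \<in> Q - {Y}"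
    using insert.IH[OF _ _ _ _ _ sizes] by blast
  obtain b where b: "bij_betw b X Y"
    using finite_same_card_bij[of X Y] Y insert.prems(1,4) by auto
  have "X \<inter> \<Union>P = {}"
    using pairwiseD[OF insert.prems(2)] insert.hyps(2) by (fastforce simp: disjnt_def)
  moreover have "Y \<inter> \<Union>(Q - {Y}) = {}"
    using pairwiseD[OF insert.prems(5)] Y(1) by (fastforce simp: disjnt_def)
  ultimately have "bij_betw (\<lambda>p. if p \<in> X then b p else c p) (X \<union> \<Union>P) (Y \<union> \<Union>(Q - {Y}))"
    by (rule bij_betw_disjoint_Un[OF b c(1)])
  moreover have "Y \<union> \<Union>(Q - {Y}) = \<Union>Q"
    using Y(1) by blast
  moreover have "(\<lambda>p. if p \<in> X then b p else c p) ` Z \<in> Q" if "Z \<in> insert X P" for Z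
  proof (cases "Z = X")
    case True
    then show ?thesis
      using b Y(1) by (simp add: bij_betw_def)
  next
    case False
    then have "Z \<inter> X = {}"
      using pairwiseD[OF insert.prems(2), of Z X] that by (auto simp: disjnt_def)
    then have "(\<lambda>p. if p \<in> X then b p else c p) ` Z = c ` Z"
      by auto
    then show ?thesis
      using c(2) that False by auto
  qed
  ultimately show ?case
    by (metis Union_insert)
qed

locale composition_blocks =
  fixes n :: nat and J :: "nat set"
  assumes n_pos: "1 \<le> n" and J_subset: "J \<subseteq> {1..n-1}"
begin

definition ends :: "nat list" where
  "ends = sorted_list_of_set ({1..n} - J)"

definition prev_end :: "nat \<Rightarrow> nat" where
  "prev_end b = (if b = 0 then 0 else ends ! (b - 1))"

definition interval :: "nat \<Rightarrow> nat set" where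
  "interval b = {prev_end b<..ends ! b}"

abbreviation num_blocks :: nat where
  "num_blocks \<equiv> length ends"

lemma ends_less: "i < j \<Longrightarrow> j < num_blocks \<Longrightarrow> ends ! i < ends ! j"
  using sorted_wrt_nth_less[OF strict_sorted_list_of_set[of "{1..n} - J"]]
  unfolding ends_def by blast

lemma ends_le: "i \<le> j \<Longrightarrow> j < num_blocks \<Longrightarrow> ends ! i \<le> ends ! j"
  using ends_less by (cases "i = j") (auto simp: less_imp_le)

lemma ends_in: "b < num_blocks \<Longrightarrow> ends ! b \<in> {1..n} - J"
  using nth_mem[of b ends] unfolding ends_def by simp

lemma n_in_ends: "n \<in> set ends"
  using n_pos J_subset by (auto simp: ends_def)

lemma num_blocks_pos: "0 < num_blocks"
  using n_in_ends by (cases ends) auto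

lemma last_end: "ends ! (num_blocks - 1) = n"
proof -
  obtain j where j: "j < num_blocks" "ends ! j = n"
    using n_in_ends by (metis in_set_conv_nth)
  have "ends ! j \<le> ends ! (num_blocks - 1)"
    using j(1) by (intro ends_le) auto
  moreover have "ends ! (num_blocks - 1) \<le> n"
    using ends_in[of "num_blocks - 1"] num_blocks_pos by simp
  ultimately show ?thesis
    using j(2) by simp
qed

lemma prev_end_less: "b < num_blocks \<Longrightarrow> prev_end b < ends ! b"
  unfolding prev_end_def using ends_less[of "b - 1" b] ends_in[of b] by auto

lemma block_index_interval:
  assumes b: "b < num_blocks" and p: "p \<in> interval b"
  shows "block_index J p = b"
proof -
  have p_le: "p \<le> ends ! b" and "1 \<le> p"
    using p by (auto simp: interval_def)
  then have "{1..<p} - J = {x \<in> {1..n} - J. x < p}"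
    using ends_in[OF b] by auto
  also have "\<dots> = (nth ends) ` {..<b}"
  proof (intro set_eqI iffI)
    fix x assume x: "x \<in> {x \<in> {1..n} - J. x < p}"
    then obtain m where m: "m < num_blocks" "x = ends ! m"
      by (metis (no_types, lifting) ends_def finite_atLeastAtMost finite_Diff in_set_conv_nth
          mem_Collect_eq set_sorted_list_of_set)
    have "m < b"
    proof (rule ccontr)
      assume "\<not> m < b"
      then have "ends ! b \<le> ends ! m"
        using ends_le m by simp
      then show False
        using x m p_le by simp
    qed
    then show "x \<in> (nth ends) ` {..<b}"
      using m by simp
  next
    fix x assume "x \<in> (nth ends) ` {..<b}"
    then obtain m where m: "m < b" "x = ends ! m"
      by auto
    have "ends ! m \<le> prev_end b"
      unfolding prev_end_def using ends_le[of m "b - 1"] m b by auto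
    moreover have "prev_end b < p"
      using p by (simp add: interval_def)
    ultimately show "x \<in> {x \<in> {1..n} - J. x < p}"
      using ends_in[of m] m b by simp
  qed
  finally have "{1..<p} - J = (nth ends) ` {..<b}" .
  moreover have "inj_on (nth ends) {..<b}"
    using inj_on_nth[of ends "{..<b}"] b by (simp add: ends_def)
  ultimately show ?thesis
    unfolding block_index_def by (simp add: card_image)
qed

lemma interval_subset: "b < num_blocks \<Longrightarrow> interval b \<subseteq> {1..n}"
  using ends_in[of b] by (auto simp: interval_def)

lemma in_some_interval:
  assumes p: "p \<in> {1..n}"
  obtains b where "b < num_blocks" "p \<in> interval b"
proof -
  define b where "b = (LEAST m. m < num_blocks \<and> p \<le> ends ! m)"
  have "num_blocks - 1 < num_blocks \<and> p \<le> ends ! (num_blocks - 1)"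
    using last_end num_blocks_pos p by simp
  then have b: "b < num_blocks" "p \<le> ends ! b"
    using LeastI[of "\<lambda>m. m < num_blocks \<and> p \<le> ends ! m"] unfolding b_def by blast+
  have "prev_end b < p"
  proof (cases "b = 0")
    case True
    then show ?thesis
      using p by (simp add: prev_end_def)
  next
    case False
    then have "\<not> (b - 1 < num_blocks \<and> p \<le> ends ! (b - 1))"
      using not_less_Least[of "b - 1" "\<lambda>m. m < num_blocks \<and> p \<le> ends ! m"]
      unfolding b_def by fastforce
    moreover have "b - 1 < num_blocks"
      using b(1) by simp
    ultimately show ?thesis
      using False by (simp add: prev_end_def)
  qed
  then show ?thesis
    using that b by (simp add: interval_def)
qed

lemma block_eq_interval:
  assumes "b < num_blocks" "p \<in> interval b"
  shows "block n J p = interval b"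
proof (intro set_eqI iffI)
  fix q assume q: "q \<in> block n J p"
  then obtain b' where b': "b' < num_blocks" "q \<in> interval b'"
    using in_some_interval by (auto simp: block_def)
  have "b' = b"
    using block_index_interval[OF b'] block_index_interval[OF assms] q by (simp add: block_def)
  then show "q \<in> interval b"
    using b'(2) by simp
next
  fix q assume q: "q \<in> interval b"
  then have "q \<in> {1..n}"
    using interval_subset[OF assms(1)] by blast
  then show "q \<in> block n J p"
    using block_index_interval[OF assms(1) q] block_index_interval[OF assms]
    by (simp add: block_def)
qed

lemma blocks_eq: "blocks n J = interval ` {..<num_blocks}"
proof (intro set_eqI iffI)
  fix X assume "X \<in> blocks n J"
  then obtain p where p: "p \<in> {1..n}" "X = block n J p"
    by (auto simp: blocks_def)
  obtain b where "b < num_blocks" "p \<in> interval b"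
    using in_some_interval[OF p(1)] .
  then show "X \<in> interval ` {..<num_blocks}"
    using p(2) block_eq_interval by blast
next
  fix X assume "X \<in> interval ` {..<num_blocks}"
  then obtain b where b: "b < num_blocks" "X = interval b"
    by auto
  have "ends ! b \<in> interval b" "ends ! b \<in> {1..n}"
    using prev_end_less[OF b(1)] ends_in[OF b(1)] by (simp_all add: interval_def)
  then show "X \<in> blocks n J"
    using block_eq_interval[OF b(1)] b(2) unfolding blocks_def by blast
qed

lemma inj_on_interval: "inj_on interval {..<num_blocks}"
proof (rule inj_onI)
  fix b b' assume b: "b \<in> {..<num_blocks}" and b': "b' \<in> {..<num_blocks}"
    and eq: "interval b = interval b'"
  have "ends ! b \<in> interval b"
    using prev_end_less b by (simp add: interval_def)
  then show "b = b'"
    using block_index_interval b b' eq by (metis lessThan_iff)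
qed

lemma ncomp_eq: "ncomp n J = map (\<lambda>b. card (interval b)) [0..<num_blocks]"
proof -
  obtain x xs where ends: "ends = x # xs"
    using num_blocks_pos by (cases ends) auto
  have len: "length (ncomp n J) = num_blocks"
    unfolding ncomp_def Let_def ends_def[symmetric] using ends by simp
  show ?thesis
  proof (rule nth_equalityI)
    fix i assume "i < length (ncomp n J)"
    then have i: "i < num_blocks"
      using len by simp
    have "map (\<lambda>b. card (interval b)) [0..<num_blocks] ! i = card (interval i)"
      using i by (simp del: upt_Suc)
    moreover have "ncomp n J ! i = card (interval i)"
    proof (cases i)
      case 0
      then show ?thesis
        unfolding ncomp_def Let_def ends_def[symmetric] using ends
        by (simp add: interval_def prev_end_def)
    next
      case (Suc j)
      have "j < length xs"
        using i Suc ends by simp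
      then have "ncomp n J ! i = xs ! j - (x # xs) ! j"
        unfolding ncomp_def Let_def ends_def[symmetric] using ends Suc by (simp add: nth_zip)
      then show ?thesis
        using Suc ends by (simp add: interval_def prev_end_def)
    qed
    ultimately show "ncomp n J ! i = map (\<lambda>b. card (interval b)) [0..<num_blocks] ! i"
      by simp
  qed (simp add: len)
qed

lemma mset_block_sizes: "image_mset card (mset_set (blocks n J)) = mset (ncomp n J)"
proof -
  have "image_mset card (mset_set (blocks n J))
      = image_mset card (image_mset interval (mset_set {..<num_blocks}))"
    unfolding blocks_eq using image_mset_mset_set[OF inj_on_interval] by simp
  also have "\<dots> = mset (ncomp n J)"
    unfolding ncomp_eq by (simp add: multiset.map_comp comp_def atLeast0LessThan)
  finally show ?thesis .
qed

end

lemma perm_matching_blocks_exists: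
  assumes n: "1 \<le> n" and J: "J \<subseteq> {1..n-1}" and J': "J' \<subseteq> {1..n-1}"
    and eq: "npart n J = npart n J'"
  obtains c where "c \<in> Sym n" "\<forall>X \<in> blocks n J. c ` X \<in> blocks n J'"
proof -
  interpret B: composition_blocks n J
    using n J by unfold_locales
  interpret B': composition_blocks n J'
    using n J' by unfold_locales
  have "mset (ncomp n J) = mset (ncomp n J')"
    using arg_cong[OF eq, of mset] by (simp add: npart_def)
  then have "image_mset card (mset_set (blocks n J)) = image_mset card (mset_set (blocks n J'))"
    by (simp add: B.mset_block_sizes B'.mset_block_sizes)
  then have "\<exists>c0. bij_betw c0 {1..n} {1..n} \<and> (\<forall>X \<in> blocks n J. c0 ` X \<in> blocks n J')"
    using bij_betw_partitions_same_sizes[OF blocks_partition(1-3) blocks_partition(1-3)]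
    unfolding blocks_partition(4) by blast
  then obtain c0 where c0: "bij_betw c0 {1..n} {1..n}" "\<forall>X \<in> blocks n J. c0 ` X \<in> blocks n J'"
    by blast
  define c where "c p = (if p \<in> {1..n} then c0 p else p)" for p
  have "bij_betw c {1..n} {1..n}"
    using c0(1) unfolding c_def by (rule bij_betw_cong[THEN iffD1, rotated]) auto
  then have "c \<in> Sym n"
    unfolding Sym_def by (auto intro: bij_imp_permutes simp: c_def)
  moreover have "c ` X = c0 ` X" if "X \<in> blocks n J" for X
    using that unfolding c_def blocks_def block_def by auto
  ultimately show ?thesis
    using that c0(2) by simp
qed

lemma maps_blocksI:
  assumes c: "c \<in> Sym n" and blocks: "\<forall>X \<in> blocks n J. c ` X \<in> blocks n J'"
  shows "maps_blocks n J J' c"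
proof -
  have image: "c ` block n J p = block n J' (c p)" if p: "p \<in> {1..n}" for p
  proof -
    have "c ` block n J p \<in> blocks n J'"
      using blocks p unfolding blocks_def by blast
    then obtain r where r: "c ` block n J p = block n J' r"
      unfolding blocks_def by blast
    have "c p \<in> c ` block n J p"
      using p by (simp add: block_def)
    then have "block n J' (c p) = block n J' r"
      unfolding r by (simp add: block_def)
    then show ?thesis
      using r by simp
  qed
  have "block_index J' (c p) = block_index J' (c q) \<longleftrightarrow> block_index J p = block_index J q"
    if p: "p \<in> {1..n}" and q: "q \<in> {1..n}" for p q
  proof -
    have "block_index J p = block_index J q \<longleftrightarrow> q \<in> block n J p"
      using q by (auto simp: block_def)
    also have "\<dots> \<longleftrightarrow> c q \<in> c ` block n J p"
      using c by (simp add: Sym_def permutes_inj inj_image_mem_iff)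
    also have "\<dots> \<longleftrightarrow> block_index J' (c p) = block_index J' (c q)"
      using image[OF p] Sym_range[OF c q] by (auto simp: block_def)
    finally show ?thesis
      by simp
  qed
  then show ?thesis
    using c by (simp add: maps_blocks_def)
qed

section \<open>Counting simple braids\<close>

lemma sum_over_supersets_eq_imp_eq:
  fixes F G :: "'a set \<Rightarrow> 'b::cancel_comm_monoid_add"
  assumes "finite S"
    and sums: "\<And>K. K \<subseteq> S \<Longrightarrow> (\<Sum>L \<in> {L. K \<subseteq> L \<and> L \<subseteq> S}. F L) = (\<Sum>L \<in> {L. K \<subseteq> L \<and> L \<subseteq> S}. G L)"
  shows "K \<subseteq> S \<Longrightarrow> F K = G K"
proof (induction "card (S - K)" arbitrary: K rule: less_induct)
  case less
  let ?U = "{L. K \<subseteq> L \<and> L \<subseteq> S}"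
  have fin: "finite ?U"
    using \<open>finite S\<close> by (auto intro: finite_subset[of _ "Pow S"])
  have K: "K \<in> ?U"
    using less.prems by simp
  have "F L = G L" if "L \<in> ?U - {K}" for L
  proof (rule less.hyps)
    have "S - L \<subset> S - K"
      using that by auto
    then show "card (S - L) < card (S - K)"
      using \<open>finite S\<close> by (intro psubset_card_mono) auto
  qed (use that in auto)
  then have "(\<Sum>L \<in> ?U - {K}. F L) = (\<Sum>L \<in> ?U - {K}. G L)"
    by (rule sum.cong[OF refl])
  then show ?case
    using sums[OF less.prems] sum.remove[OF fin K, of F] sum.remove[OF fin K, of G] by simp
qed

lemma ahat_eq_card: "ahat n I J = card (perms_with_descents n I J)"
  unfolding ahat_def perms_with_descents_def
  using card_simple_braids_eq_card_perms[of n "\<lambda>L R. I \<subseteq> L \<and> J \<subseteq> R"] by simp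

lemma a_count_eq_card: "a_count n I J = card {f \<in> Sym n. left_descents n f = I \<and> J \<subseteq> descents n f}"
  unfolding a_count_def
  using card_simple_braids_eq_card_perms[of n "\<lambda>L R. L = I \<and> J \<subseteq> R"] by simp

lemma ahat_eq_sum_a_count:
  assumes "K \<subseteq> gens n"
  shows "ahat n K J = (\<Sum>L \<in> {L. K \<subseteq> L \<and> L \<subseteq> gens n}. a_count n L J)"
proof -
  have "left_descents n f \<subseteq> gens n" for f
    by (simp add: left_descents_def descents_def)
  then have "perms_with_descents n K J
      = (\<Union>L \<in> {L. K \<subseteq> L \<and> L \<subseteq> gens n}. {f \<in> Sym n. left_descents n f = L \<and> J \<subseteq> descents n f})"
    by (auto simp: perms_with_descents_def)
  moreover have "finite {L. K \<subseteq> L \<and> L \<subseteq> gens n}"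
    by (rule finite_subset[of _ "Pow (gens n)"]) (auto simp: gens_def)
  ultimately show ?thesis
    unfolding ahat_eq_card a_count_eq_card
    by (simp, intro card_UN_disjoint) (auto intro: finite_subset[OF _ finite_Sym])
qed

lemma ahat_commute: "ahat n I J = ahat n J I"
  by (simp add: ahat_eq_card card_perms_with_descents_commute)

lemma ahat_npart_right:
  assumes "1 \<le> n" "I \<subseteq> {1..n-1}" "J \<subseteq> {1..n-1}" "J' \<subseteq> {1..n-1}" "npart n J = npart n J'"
  shows "ahat n I J = ahat n I J'"
proof -
  obtain c where "c \<in> Sym n" "\<forall>X \<in> blocks n J. c ` X \<in> blocks n J'"
    using perm_matching_blocks_exists[OF assms(1,3-5)] .
  then have c: "maps_blocks n J J' c"
    by (rule maps_blocksI)
  have "gens n = {1..n-1}"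
    by (simp add: gens_def)
  then show ?thesis
    unfolding ahat_eq_card
    using card_perms_with_descents_eq_card_double_cosets card_double_cosets_conj[OF c] assms(2-4)
    by simp
qed

lemma a_count_npart_right:
  assumes "1 \<le> n" "I \<subseteq> {1..n-1}" "J \<subseteq> {1..n-1}" "J' \<subseteq> {1..n-1}" "npart n J = npart n J'"
  shows "a_count n I J = a_count n I J'"
proof -
  have gens: "gens n = {1..n-1}"
    by (simp add: gens_def)
  have "(\<Sum>L \<in> {L. K \<subseteq> L \<and> L \<subseteq> gens n}. a_count n L J)
      = (\<Sum>L \<in> {L. K \<subseteq> L \<and> L \<subseteq> gens n}. a_count n L J')"
    if "K \<subseteq> gens n" for K
    using ahat_npart_right[of n K J J'] ahat_eq_sum_a_count[OF that] assms that gens by simp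
  then show ?thesis
    by (rule sum_over_supersets_eq_imp_eq[rotated]) (use assms(2) gens in auto)
qed

theorem corollary3p5:
  fixes n :: nat
  assumes "n \<ge> 1"
  shows "(\<forall>I J I' J'. I \<subseteq> {1..n-1} \<and> J \<subseteq> {1..n-1} \<and> I' \<subseteq> {1..n-1} \<and> J' \<subseteq> {1..n-1}
            \<and> npart n I = npart n I' \<and> npart n J = npart n J'
            \<longrightarrow> ahat n I J = ahat n I' J')
       \<and> (\<forall>I J J'. I \<subseteq> {1..n-1} \<and> J \<subseteq> {1..n-1} \<and> J' \<subseteq> {1..n-1}
            \<and> npart n J = npart n J'
            \<longrightarrow> a_count n I J = a_count n I J')"
proof (intro conjI allI impI; elim conjE)
  fix I J I' J'
  assume "I \<subseteq> {1..n-1}" "J \<subseteq> {1..n-1}" "I' \<subseteq> {1..n-1}" "J' \<subseteq> {1..n-1}"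
    and "npart n I = npart n I'" "npart n J = npart n J'"
  then have "ahat n I J = ahat n I J'" and "ahat n J' I = ahat n J' I'"
    using ahat_npart_right[OF assms] by blast+
  then show "ahat n I J = ahat n I' J'"
    using ahat_commute by metis
next
  fix I J J'
  assume "I \<subseteq> {1..n-1}" "J \<subseteq> {1..n-1}" "J' \<subseteq> {1..n-1}" "npart n J = npart n J'"
  then show "a_count n I J = a_count n I J'"
    by (rule a_count_npart_right[OF assms])
qed

end
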